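(* There is a constant $C$ such that for all $\theta\in\mathbb S_1$: (a) $|\partial_Ex(\theta,E)|\le C(E-E_{\min})^{-1/2}$ for $E\in(E_{\min},E_0]$; (b) $|x(\theta,E_1)-x(\theta,E_2)|\le C\sqrt{|E_1-E_2|}$ for $E_1,E_2\in(E_{\min},E_0]$; (c) $|\partial_Ev(\theta,E)|\le C(E-E_{\min})^{-1/2}$ for $E\in(E_{\min},E_0]$; (d) $|v(\theta,E_1)-v(\theta,E_2)|\le C\sqrt{|E_1-E_2|}$ for $E_1,E_2\in(E_{\min},E_0]$.
   Context: Let $E_0>0$ and let $\varphi$ be either a polytrope $\varphi(E)=(E_0-E)_+^k$, $k\ge1$, or the King profile $\varphi(E)=(e^{E_0-E}-1)_+$. Let $(f_0,U_0)$ be the steady state $f_0=\varphi(\frac12v^2+U_0(x))$ of mass $M_0>0$ of the plane-symmetric 1D gravitational Vlasov–Poisson system ($U(x)=2\pi\int|x-y|\rho(y)dy$, $\rho=\int fdv$). Then $U_0\in C^3(\mathbb R)$ even, convex, strictly increasing on $[0,\infty)$, $U_0''(0)=4\pi\rho_0(0)>0$, and $E_0=U_0(R_0)$ where $[-R_0,R_0]$ is the support of $\rho_0$. $E_{\min}=U_0(0)$. For $E\in(E_{\min},E_0]$, $x_-(E)=-x_+(E)<0$ solve $U_0(x)=E$; $T(E)=2\int_{x_-(E)}^{x_+(E)}(2(E-U_0))^{-1/2}dx$ is the period ($C^1$, $T'>0$, bounded). For $E\in(E_{\min},E_0]$, $(X(t,E),V(t,E))$ is the solution of $\dot X=V$,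 $\dot V=-U_0'(X)$ with $(X,V)(0)=(x_-(E),0)$, which is $T(E)$-periodic; $\mathbb S_1=[0,1]$ with $0,1$ identified; $x(\theta,E)=X(\theta T(E),E)$, $v(\theta,E)=V(\theta T(E),E)$. *)

theory Defs
  imports "HOL-Analysis.Analysis"
begin

definition polytrope :: "real \<Rightarrow> real \<Rightarrow> real \<Rightarrow> real" where
  "polytrope E0 k E = (max 0 (E0 - E)) powr k"

definition king :: "real \<Rightarrow> real \<Rightarrow> real" where
  "king E0 E = max 0 (exp (E0 - E) - 1)"

text \<open>Spatial density induced by the potential U via f = phi(v^2/2 + U(x)).\<close>
definition dens :: "(real \<Rightarrow> real) \<Rightarrow> (real \<Rightarrow> real) \<Rightarrow> real \<Rightarrow> real" where
  "dens phi U x = (LINT v|lborel. phi (v\<^sup>2 / 2 + U x))"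

definition xplus :: "(real \<Rightarrow> real) \<Rightarrow> real \<Rightarrow> real" where
  "xplus U E = (THE x. 0 \<le> x \<and> U x = E)"

definition period :: "(real \<Rightarrow> real) \<Rightarrow> real \<Rightarrow> real" where
  "period U E = 2 * (LBINT x = - xplus U E .. xplus U E. 1 / sqrt (2 * (E - U x)))"

end

(*
  In the Morse coordinate y = sgn x * sqrt (2 (U0 x - Emin)) the potential becomes Emin + y^2/2,
  and since U0''(0) > 0 the map x |-> y is a C^2 diffeomorphism of the line.  In the variables
  (y, v) the orbit of energy Emin + r^2/2 is the circle of radius r, run through at angular speed
  1 / G'(- r cos psi), where G is the inverse of x |-> y.  Consequently the period, and the angle
  reached after the fraction theta of the period (defined implicitly by an integral equation),
  depend smoothly on the amplitude r uniformly down to r = 0, so position and velocity at time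
  theta * T are Lipschitz in r.  The substitution r = sqrt (2 (E - Emin)) turns this into the
  bound (E - Emin)^(-1/2) for the E-derivatives and into Hoelder-1/2 continuity in E.
*)

theory Submission
  imports Defs
begin

lemma DERIV_even_imp_odd:
  fixes f f' :: "real \<Rightarrow> real"
  assumes "\<And>x. f (- x) = f x" "\<And>x. (f has_real_derivative f' x) (at x)"
  shows "f' (- x) = - f' x"
proof -
  have "((\<lambda>x. f (- x)) has_real_derivative - f' (- x)) (at x)"
    using DERIV_chain2[OF assms(2) DERIV_minus[OF DERIV_ident]] by simp
  moreover have "(\<lambda>x. f (- x)) = f" using assms(1) by auto
  ultimately show ?thesis using assms(2) DERIV_unique by fastforce
qed

lemma DERIV_odd_imp_even:
  fixes f f' :: "real \<Rightarrow> real"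
  assumes "\<And>x. f (- x) = - f x" "\<And>x. (f has_real_derivative f' x) (at x)"
  shows "f' (- x) = f' x"
proof -
  have "((\<lambda>x. f (- x)) has_real_derivative - f' (- x)) (at x)"
    using DERIV_chain2[OF assms(2) DERIV_minus[OF DERIV_ident]] by simp
  moreover have "((\<lambda>x. f (- x)) has_real_derivative - f' x) (at x)"
    using DERIV_minus[OF assms(2)] by (simp add: assms(1))
  ultimately show ?thesis using DERIV_unique by fastforce
qed

lemma abs_sqrt_diff_le_sqrt_abs_diff:
  fixes x y :: real
  assumes "0 \<le> x" "0 \<le> y"
  shows "\<bar>sqrt x - sqrt y\<bar> \<le> sqrt \<bar>x - y\<bar>"
proof -
  have le: "sqrt a - sqrt b \<le> sqrt (a - b)" if "0 \<le> b" "b \<le> a" for a b :: real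
    using sqrt_add_le_add_sqrt[of "a - b" b] that by simp
  show ?thesis
    using assms le[of y x] le[of x y] real_sqrt_le_mono[of y x] real_sqrt_le_mono[of x y]
    by (cases "y \<le> x") (auto simp: abs_if)
qed

lemma abs_rotation_derivative_terms_le:
  fixes a A r R D B \<phi> :: real
  assumes "\<bar>r\<bar> \<le> R" "\<bar>D\<bar> \<le> B" "\<bar>a\<bar> \<le> A"
  shows "\<bar>a * (- cos \<phi> + r * sin \<phi> * D)\<bar> \<le> A * (1 + R * B)"
    and "\<bar>sin \<phi> + r * (cos \<phi> * D)\<bar> \<le> 1 + R * B"
proof -
  have "\<bar>sin \<phi>\<bar> * \<bar>D\<bar> \<le> 1 * B" "\<bar>cos \<phi>\<bar> * \<bar>D\<bar> \<le> 1 * B"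
    using assms(2) by (intro mult_mono abs_sin_le_one abs_cos_le_one; simp)+
  then have "\<bar>r\<bar> * (\<bar>sin \<phi>\<bar> * \<bar>D\<bar>) \<le> R * B" "\<bar>r\<bar> * (\<bar>cos \<phi>\<bar> * \<bar>D\<bar>) \<le> R * B"
    using assms(1) by (auto intro!: mult_mono order_trans[OF abs_ge_zero assms(1)])
  moreover have "\<bar>- cos \<phi> + r * sin \<phi> * D\<bar> \<le> \<bar>cos \<phi>\<bar> + \<bar>r\<bar> * (\<bar>sin \<phi>\<bar> * \<bar>D\<bar>)"
    "\<bar>sin \<phi> + r * (cos \<phi> * D)\<bar> \<le> \<bar>sin \<phi>\<bar> + \<bar>r\<bar> * (\<bar>cos \<phi>\<bar> * \<bar>D\<bar>)"
    using abs_triangle_ineq[of "- cos \<phi>" "r * sin \<phi> * D"] abs_triangle_ineq[of "sin \<phi>" "r * (cos \<phi> * D)"]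
    by (simp_all add: abs_mult mult.assoc)
  ultimately have x: "\<bar>- cos \<phi> + r * sin \<phi> * D\<bar> \<le> 1 + R * B"
    and "\<bar>sin \<phi> + r * (cos \<phi> * D)\<bar> \<le> 1 + R * B"
    using abs_cos_le_one[of \<phi>] abs_sin_le_one[of \<phi>] by linarith+
  then show "\<bar>sin \<phi> + r * (cos \<phi> * D)\<bar> \<le> 1 + R * B" by blast
  show "\<bar>a * (- cos \<phi> + r * sin \<phi> * D)\<bar> \<le> A * (1 + R * B)"
    unfolding abs_mult by (rule mult_mono'[OF assms(3) x]) simp_all
qed

lemma lipschitz_on_interval_if_C1:
  fixes f f' :: "real \<Rightarrow> real"
  assumes f': "\<And>x. (f has_real_derivative f' x) (at x)" and cont: "continuous_on UNIV f'"
  obtains L where "L \<ge> 0" "\<And>a b. \<bar>a\<bar> \<le> K \<Longrightarrow> \<bar>b\<bar> \<le> K \<Longrightarrow> \<bar>f a - f b\<bar> \<le> L * \<bar>a - b\<bar>"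
proof -
  have "continuous_on {-\<bar>K\<bar>..\<bar>K\<bar>} (\<lambda>y. \<bar>f' y\<bar>)"
    using cont by (intro continuous_intros) (auto intro: continuous_on_subset)
  then obtain z where z: "\<forall>y\<in>{-\<bar>K\<bar>..\<bar>K\<bar>}. \<bar>f' y\<bar> \<le> \<bar>f' z\<bar>"
    using continuous_attains_sup[of "{-\<bar>K\<bar>..\<bar>K\<bar>}"] by auto
  have bound: "\<bar>f a - f b\<bar> \<le> \<bar>f' z\<bar> * \<bar>a - b\<bar>" if "\<bar>a\<bar> \<le> K" "\<bar>b\<bar> \<le> K" for a b
  proof -
    have "norm (f a - f b) \<le> \<bar>f' z\<bar> * norm (a - b)"
      by (rule field_differentiable_bound[of "{-\<bar>K\<bar>..\<bar>K\<bar>}" f f'])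
        (use z that in \<open>auto intro: has_field_derivative_at_within f'\<close>)
    then show ?thesis by simp
  qed
  show ?thesis by (rule that[of "\<bar>f' z\<bar>"]) (use bound in auto)
qed

lemma energy_conservation:
  fixes U U' x v :: "real \<Rightarrow> real"
  assumes U: "\<And>y. (U has_real_derivative U' y) (at y)"
    and x': "\<And>t. (x has_real_derivative v t) (at t)"
    and v': "\<And>t. (v has_real_derivative - U' (x t)) (at t)"
  shows "(v t)\<^sup>2 / 2 + U (x t) = (v 0)\<^sup>2 / 2 + U (x 0)"
proof -
  have "((\<lambda>s. (v s)\<^sup>2 / 2 + U (x s)) has_real_derivative 0) (at s)" for s
  proof -
    have "((\<lambda>s. (v s)\<^sup>2 / 2 + U (x s)) has_real_derivative
           2 * v s * (- U' (x s)) / 2 + U' (x s) * v s) (at s)"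
      by (auto intro!: derivative_eq_intros x' v' DERIV_chain2[OF U])
    then show ?thesis by simp
  qed
  then show ?thesis by (intro DERIV_isconst_all) auto
qed

lemma lipschitz_cross_term_le:
  fixes p q u L :: real
  assumes "0 \<le> L" "\<bar>u\<bar> \<le> L * \<bar>p\<bar>"
  shows "2 * p * q - 2 * q * u \<le> (1 + L) * (p\<^sup>2 + q\<^sup>2)"
proof -
  have "2 * p * q - 2 * q * u \<le> 2 * \<bar>p\<bar> * \<bar>q\<bar> + 2 * \<bar>q\<bar> * \<bar>u\<bar>"
    using abs_ge_self[of "p * q"] abs_ge_minus_self[of "q * u"] by (simp add: abs_mult)
  also have "\<dots> \<le> (1 + L) * (2 * \<bar>p\<bar> * \<bar>q\<bar>)"
    using mult_left_mono[OF assms(2), of "2 * \<bar>q\<bar>"] by (simp add: algebra_simps)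
  also have "\<dots> \<le> (1 + L) * (p\<^sup>2 + q\<^sup>2)"
  proof -
    have "2 * \<bar>p\<bar> * \<bar>q\<bar> \<le> p\<^sup>2 + q\<^sup>2"
      using zero_le_power2[of "\<bar>p\<bar> - \<bar>q\<bar>"] by (simp add: power2_diff)
    then show ?thesis using assms(1) by (intro mult_left_mono) auto
  qed
  finally show ?thesis .
qed

text \<open>The squared distance in phase space, damped by \<open>exp (- (1 + L) s)\<close>, is nonincreasing.\<close>

lemma second_order_ode_unique:
  fixes f x1 v1 x2 v2 :: "real \<Rightarrow> real"
  assumes cont: "continuous_on {0..T} x1" "continuous_on {0..T} v1"
      "continuous_on {0..T} x2" "continuous_on {0..T} v2"
    and x1': "\<And>s. 0 < s \<Longrightarrow> s < T \<Longrightarrow> (x1 has_real_derivative v1 s) (at s)"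
    and v1': "\<And>s. 0 < s \<Longrightarrow> s < T \<Longrightarrow> (v1 has_real_derivative - f (x1 s)) (at s)"
    and x2': "\<And>s. 0 < s \<Longrightarrow> s < T \<Longrightarrow> (x2 has_real_derivative v2 s) (at s)"
    and v2': "\<And>s. 0 < s \<Longrightarrow> s < T \<Longrightarrow> (v2 has_real_derivative - f (x2 s)) (at s)"
    and init: "x1 0 = x2 0" "v1 0 = v2 0"
    and lip: "0 \<le> L" "\<And>s. 0 \<le> s \<Longrightarrow> s \<le> T \<Longrightarrow> \<bar>f (x1 s) - f (x2 s)\<bar> \<le> L * \<bar>x1 s - x2 s\<bar>"
    and t: "0 \<le> t" "t \<le> T"
  shows "x1 t = x2 t \<and> v1 t = v2 t"
proof (cases "t = 0")
  case True
  then show ?thesis using init by simp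
next
  case False
  then have t0: "0 < t" using t by simp
  define D where "D s = (x1 s - x2 s)\<^sup>2 + (v1 s - v2 s)\<^sup>2" for s
  define e where "e s = exp (- (1 + L) * s) * D s" for s
  define e' where "e' s = exp (- (1 + L) * s) * (2 * (x1 s - x2 s) * (v1 s - v2 s)
      - 2 * (v1 s - v2 s) * (f (x1 s) - f (x2 s)) - (1 + L) * D s)" for s
  have "{0..t} \<subseteq> {0..T}" using t by auto
  then have "continuous_on {0..t} e"
    unfolding e_def D_def using cont by (intro continuous_intros) (auto intro: continuous_on_subset)
  moreover have e_deriv: "(e has_real_derivative e' s) (at s)" if "0 < s" "s < t" for s
  proof -
    have s: "0 < s" "s < T" using that t by auto
    show ?thesis unfolding e_def[abs_def] D_def[abs_def]
      by (rule derivative_eq_intros x1'[OF s] v1'[OF s] x2'[OF s] v2'[OF s] refl | simp)+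
        (simp add: e'_def D_def algebra_simps)
  qed
  ultimately obtain l s where s: "0 < s" "s < t" "(e has_real_derivative l) (at s)" "e t - e 0 = (t - 0) * l"
    using MVT[OF t0, of e] unfolding real_differentiable_def by blast
  then have "l = e' s" using e_deriv DERIV_unique by blast
  have "e' s \<le> 0"
    using lipschitz_cross_term_le[OF lip(1) lip(2), of s "v1 s - v2 s"] s t
    by (simp add: e'_def D_def mult_nonneg_nonpos)
  then have "e t \<le> 0" using s t0 init \<open>l = e' s\<close> by (simp add: e_def D_def mult_nonneg_nonpos)
  then have "D t \<le> 0" by (simp add: e_def mult_le_0_iff)
  then show ?thesis by (simp add: D_def sum_power2_le_zero_iff)
qed

lemma MVT_between:
  fixes f f' :: "real \<Rightarrow> real"
  assumes cont: "\<And>z. isCont f z"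
    and deriv: "\<And>z. z \<noteq> x \<Longrightarrow> (f has_real_derivative f' z) (at z)"
    and "y \<noteq> x"
  obtains \<xi> where "\<xi> \<noteq> x" "\<bar>\<xi> - x\<bar> < \<bar>y - x\<bar>" "f y - f x = (y - x) * f' \<xi>"
proof -
  have mvt: "\<exists>\<xi>. a < \<xi> \<and> \<xi> < b \<and> f b - f a = (b - a) * f' \<xi>" if "a < b" "x \<in> {a, b}" for a b
  proof -
    have "continuous_on {a..b} f" using cont by (simp add: continuous_at_imp_continuous_on)
    moreover have "f differentiable (at z)" if "a < z" "z < b" for z
      using deriv[of z] \<open>x \<in> {a, b}\<close> that unfolding real_differentiable_def by auto
    ultimately obtain l \<xi> where "a < \<xi>" "\<xi> < b" "(f has_real_derivative l) (at \<xi>)" "f b - f a = (b - a) * l"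
      using MVT[OF \<open>a < b\<close>, of f] by blast
    moreover have "l = f' \<xi>" using calculation deriv[of \<xi>] \<open>x \<in> {a, b}\<close> DERIV_unique by auto
    ultimately show ?thesis by blast
  qed
  show ?thesis
  proof (cases "x < y")
    case True
    then show ?thesis using mvt[of x y] that by fastforce
  next
    case False
    then have "y < x" using \<open>y \<noteq> x\<close> by simp
    then obtain \<xi> where "y < \<xi>" "\<xi> < x" "f x - f y = (x - y) * f' \<xi>" using mvt[of y x] by auto
    then show ?thesis using that[of \<xi>] by (auto simp: algebra_simps)
  qed
qed

lemma DERIV_from_derivative_limit:
  fixes f f' :: "real \<Rightarrow> real"
  assumes cont: "isCont f x"
    and deriv: "\<And>y. y \<noteq> x \<Longrightarrow> (f has_real_derivative f' y) (at y)"
    and lim: "(f' \<longlongrightarrow> l) (at x)"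
  shows "(f has_real_derivative l) (at x)"
  unfolding has_field_derivative_iff
proof (rule tendstoI)
  fix e :: real assume "e > 0"
  then obtain d where d: "d > 0" "\<And>y. y \<noteq> x \<Longrightarrow> dist y x < d \<Longrightarrow> dist (f' y) l < e"
    using lim[unfolded tendsto_iff] by (auto simp: eventually_at)
  have cont_all: "isCont f z" for z using cont deriv DERIV_isCont by (cases "z = x") auto
  have "dist ((f y - f x) / (y - x)) l < e" if "y \<noteq> x" "dist y x < d" for y
  proof -
    obtain \<xi> where \<xi>: "\<xi> \<noteq> x" "\<bar>\<xi> - x\<bar> < \<bar>y - x\<bar>" "f y - f x = (y - x) * f' \<xi>"
      using MVT_between[OF cont_all deriv \<open>y \<noteq> x\<close>] by blast
    then show ?thesis using d(2)[of \<xi>] that by (simp add: dist_real_def)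
  qed
  then show "\<forall>\<^sub>F y in at x. dist ((f y - f x) / (y - x)) l < e"
    unfolding eventually_at using d(1) by blast
qed

lemma sqrt_reparam_has_derivative:
  fixes F h :: "real \<Rightarrow> real"
  assumes F: "\<And>e. e \<in> {m<..E} \<Longrightarrow> F e = h (sqrt (2 * (e - m)))"
    and h': "\<And>r. r \<in> {0<..sqrt (2 * (E - m))} \<Longrightarrow>
      \<exists>D. (h has_real_derivative D) (at r within {0<..sqrt (2 * (E - m))}) \<and> \<bar>D\<bar> \<le> L"
    and e: "e \<in> {m<..E}"
  shows "\<exists>D'. (F has_real_derivative D') (at e within {m<..E}) \<and> \<bar>D'\<bar> \<le> L * (e - m) powr (-1/2)"
proof -
  define \<rho> where "\<rho> e = sqrt (2 * (e - m))" for e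
  have \<rho>_pos: "0 < \<rho> e" using e by (simp add: \<rho>_def)
  obtain D where D: "(h has_real_derivative D) (at (\<rho> e) within {0<..\<rho> E})" "\<bar>D\<bar> \<le> L"
    using h'[of "\<rho> e"] e by (auto simp: \<rho>_def)
  have "((\<lambda>e. sqrt (2 * (e - m))) has_real_derivative inverse (\<rho> e) / 2 * 2) (at e)"
    using e by (auto intro!: derivative_eq_intros simp: \<rho>_def)
  then have \<rho>': "(\<rho> has_real_derivative 1 / \<rho> e) (at e within {m<..E})"
    by (auto simp: \<rho>_def[abs_def] inverse_eq_divide intro: has_field_derivative_at_within)
  have "\<rho> ` {m<..E} \<subseteq> {0<..\<rho> E}" by (auto simp: \<rho>_def)
  then have "((h \<circ> \<rho>) has_real_derivative D * (1 / \<rho> e)) (at e within {m<..E})"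
    using DERIV_image_chain[OF DERIV_subset[OF D(1)] \<rho>'] by blast
  then have "(F has_real_derivative D * (1 / \<rho> e)) (at e within {m<..E})"
    by (rule has_field_derivative_transform_within[where d=1]) (use e F in \<open>auto simp: \<rho>_def\<close>)
  moreover have "\<bar>D * (1 / \<rho> e)\<bar> \<le> L * (e - m) powr (-1/2)"
  proof -
    have "\<bar>D * (1 / \<rho> e)\<bar> = \<bar>D\<bar> / \<rho> e"
      using \<rho>_pos by (simp add: abs_mult)
    also have "\<dots> = \<bar>D\<bar> / (sqrt 2 * sqrt (e - m))"
      unfolding \<rho>_def by (subst real_sqrt_mult) (rule refl)
    also have "\<dots> \<le> \<bar>D\<bar> / sqrt (e - m)"
      using e by (intro divide_left_mono) (auto simp: mult_le_cancel_right1)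
    also have "\<dots> \<le> L / sqrt (e - m)"
      using e D(2) by (simp add: divide_right_mono)
    finally show ?thesis using e by (simp add: powr_minus_divide powr_half_sqrt)
  qed
  ultimately show ?thesis by blast
qed

lemma sqrt_reparam_hoelder:
  fixes F h :: "real \<Rightarrow> real"
  assumes F: "\<And>e. e \<in> {m<..E} \<Longrightarrow> F e = h (sqrt (2 * (e - m)))"
    and h': "\<And>r. r \<in> {0<..sqrt (2 * (E - m))} \<Longrightarrow>
      \<exists>D. (h has_real_derivative D) (at r within {0<..sqrt (2 * (E - m))}) \<and> \<bar>D\<bar> \<le> L"
    and e: "e1 \<in> {m<..E}" "e2 \<in> {m<..E}"
  shows "\<bar>F e1 - F e2\<bar> \<le> sqrt 2 * L * sqrt \<bar>e1 - e2\<bar>"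
proof -
  define \<rho> where "\<rho> e = sqrt (2 * (e - m))" for e
  have "\<forall>r\<in>{0<..\<rho> E}. \<exists>D. (h has_real_derivative D) (at r within {0<..\<rho> E}) \<and> \<bar>D\<bar> \<le> L"
    using h' by (simp add: \<rho>_def)
  then obtain h'' where h'': "\<forall>r\<in>{0<..\<rho> E}. (h has_real_derivative h'' r) (at r within {0<..\<rho> E}) \<and> \<bar>h'' r\<bar> \<le> L"
    by (rule bchoice[THEN exE]) blast
  have \<rho>_in: "\<rho> e \<in> {0<..\<rho> E}" if "e \<in> {m<..E}" for e using that by (simp add: \<rho>_def)
  have "0 \<le> L" using bspec[OF h'' \<rho>_in[OF e(1)]] by linarith
  have "\<bar>h (\<rho> e1) - h (\<rho> e2)\<bar> \<le> L * \<bar>\<rho> e1 - \<rho> e2\<bar>"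
    using field_differentiable_bound[of "{0<..\<rho> E}" h h'' L "\<rho> e1" "\<rho> e2"] h'' \<rho>_in[OF e(1)] \<rho>_in[OF e(2)]
    by simp
  also have "\<bar>\<rho> e1 - \<rho> e2\<bar> \<le> sqrt \<bar>2 * (e1 - m) - 2 * (e2 - m)\<bar>"
    unfolding \<rho>_def by (rule abs_sqrt_diff_le_sqrt_abs_diff) (use e in auto)
  also have "\<dots> = sqrt 2 * sqrt \<bar>e1 - e2\<bar>"
  proof -
    have "\<bar>2 * (e1 - m) - 2 * (e2 - m)\<bar> = 2 * \<bar>e1 - e2\<bar>" by (simp add: abs_if)
    then show ?thesis by (simp add: real_sqrt_mult)
  qed
  finally have "\<bar>h (\<rho> e1) - h (\<rho> e2)\<bar> \<le> L * (sqrt 2 * sqrt \<bar>e1 - e2\<bar>)"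
    using \<open>0 \<le> L\<close> by (simp add: mult_left_mono)
  then show ?thesis using F e by (simp add: \<rho>_def mult.assoc mult.left_commute)
qed

section \<open>The Morse coordinate of a single well\<close>

locale single_well =
  fixes U0 U1 U2 U3 :: "real \<Rightarrow> real"
  assumes U0_deriv: "\<And>x. (U0 has_real_derivative U1 x) (at x)"
    and U1_deriv: "\<And>x. (U1 has_real_derivative U2 x) (at x)"
    and U2_deriv: "\<And>x. (U2 has_real_derivative U3 x) (at x)"
    and U3_cont: "continuous_on UNIV U3"
    and U0_even: "\<And>x. U0 (- x) = U0 x"
    and U0_convex: "convex_on UNIV U0"
    and U0_strict_mono: "strict_mono_on {0..} U0"
    and U2_0_pos: "U2 0 > 0"
begin

lemma U1_odd: "U1 (- x) = - U1 x"
  by (rule DERIV_even_imp_odd[OF U0_even U0_deriv])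

lemma U2_even: "U2 (- x) = U2 x"
  by (rule DERIV_odd_imp_even[OF U1_odd U1_deriv])

lemma U3_odd: "U3 (- x) = - U3 x"
  by (rule DERIV_even_imp_odd[OF U2_even U2_deriv])

lemma U1_0: "U1 0 = 0" using U1_odd[of 0] by simp
lemma U3_0: "U3 0 = 0" using U3_odd[of 0] by simp

lemma U0_isCont: "isCont U0 x" using U0_deriv DERIV_isCont by blast
lemma U2_isCont: "isCont U2 x" using U2_deriv DERIV_isCont by blast
lemma U3_isCont: "isCont U3 x" using U3_cont by (simp add: continuous_on_eq_continuous_at)

definition "Emin = U0 0"
definition "height x = U0 x - Emin"

lemma height_pos: "x \<noteq> 0 \<Longrightarrow> height x > 0"
proof -
  assume "x \<noteq> 0"
  then have "0 < \<bar>x\<bar>" by simp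
  then have "U0 0 < U0 \<bar>x\<bar>" using U0_strict_mono by (auto simp: strict_mono_on_def)
  moreover have "U0 \<bar>x\<bar> = U0 x" using U0_even by (cases "x \<ge> 0") (auto simp: abs_if)
  ultimately show ?thesis by (simp add: height_def Emin_def)
qed

lemma height_0: "height 0 = 0" by (simp add: height_def Emin_def)
lemma height_nonneg: "height x \<ge> 0" using height_pos[of x] height_0 by (cases "x = 0") auto

lemma U1_pos: "x > 0 \<Longrightarrow> U1 x > 0"
proof -
  assume x: "x > 0"
  have "U0 0 - U0 x \<ge> U1 x * (0 - x)"
    by (rule convex_on_imp_above_tangent[OF U0_convex]) (auto simp: U0_deriv has_field_derivative_at_within)
  then have "U1 x * x \<ge> height x" by (simp add: height_def Emin_def algebra_simps)
  moreover have "height x > 0" using height_pos x by simp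
  ultimately have "U1 x * x > 0" by linarith
  then show ?thesis using x by (simp add: zero_less_mult_iff)
qed

lemma U1_neg: "x < 0 \<Longrightarrow> U1 x < 0"
  using U1_pos[of "-x"] U1_odd[of x] by simp

lemma height_has_derivative: "(height has_real_derivative U1 x) (at x)"
  unfolding height_def[abs_def] by (auto intro!: derivative_eq_intros U0_deriv)

lemma height_isCont: "isCont height x" using height_has_derivative DERIV_isCont by blast

lemma U1_over_id_tendsto: "((\<lambda>y. U1 y / y) \<longlongrightarrow> U2 0) (at 0)"
  using U1_deriv[of 0] unfolding has_field_derivative_iff by (simp add: U1_0)

lemma height_over_square_tendsto: "((\<lambda>x. height x / x^2) \<longlongrightarrow> U2 0 / 2) (at 0)"
proof (rule lhopital[where f' = U1 and g' = "\<lambda>x. 2 * x"])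
  show "(height \<longlongrightarrow> 0) (at 0)" using height_isCont[of 0] height_0 by (simp add: isCont_def)
  show "((\<lambda>x. x^2) \<longlongrightarrow> (0::real)) (at 0)" by (auto intro!: tendsto_eq_intros)
  show "\<forall>\<^sub>F x in at 0. x^2 \<noteq> (0::real)" by (auto simp: eventually_at_filter)
  show "\<forall>\<^sub>F x in at 0. 2 * x \<noteq> (0::real)" by (auto simp: eventually_at_filter)
  show "\<forall>\<^sub>F x in at 0. (height has_real_derivative U1 x) (at x)" using height_has_derivative by simp
  show "\<forall>\<^sub>F x in at 0. ((\<lambda>x. x^2) has_real_derivative 2 * x) (at x)"
    by (intro always_eventually allI) (auto intro!: derivative_eq_intros)
  show "((\<lambda>x. U1 x / (2 * x)) \<longlongrightarrow> U2 0 / 2) (at 0)"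
    using tendsto_divide[OF U1_over_id_tendsto tendsto_const[of 2]] by (simp add: mult.commute)
qed

text \<open>At \<open>0\<close> the quotients defining the derivatives
  \<open>morse_d1\<close> and \<open>morse_d2\<close> are \<open>0 / 0\<close>; their values there are the limits.\<close>

definition "morse x = sgn x * sqrt (2 * height x)"
definition "morse_d1 x = (if x = 0 then sqrt (U2 0) else U1 x / morse x)"
definition "morse_defect x = 2 * U2 x * height x - (U1 x)^2"
definition "morse_d2 x = (if x = 0 then 0 else morse_defect x / (morse x)^3)"

lemma morse_sq: "(morse x)^2 = 2 * height x"
  by (cases "x = 0") (auto simp: morse_def height_0 power_mult_distrib height_nonneg sgn_if)

lemma morse_0: "morse 0 = 0" by (simp add: morse_def)
lemma morse_pos: "x > 0 \<Longrightarrow> morse x > 0" using height_pos[of x] by (simp add: morse_def)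
lemma morse_neg: "x < 0 \<Longrightarrow> morse x < 0" using height_pos[of x] by (simp add: morse_def)
lemma morse_nonzero: "x \<noteq> 0 \<Longrightarrow> morse x \<noteq> 0" by (metis morse_pos morse_neg less_irrefl linorder_neqE_linordered_idom)

lemma morse_over_id_tendsto: "((\<lambda>x. morse x / x) \<longlongrightarrow> sqrt (U2 0)) (at 0)"
proof -
  have "((\<lambda>x. sqrt (2 * (height x / x^2))) \<longlongrightarrow> sqrt (2 * (U2 0 / 2))) (at 0)"
    by (intro tendsto_intros height_over_square_tendsto)
  moreover have aux: "sqrt (2 * (height x / x^2)) = morse x / x" if "x \<noteq> 0" for x
  proof -
    have "sqrt (2 * (height x / x^2)) = sqrt (2 * height x) / \<bar>x\<bar>"
      by (simp add: real_sqrt_divide)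
    also have "\<dots> = morse x / x" using \<open>x \<noteq> 0\<close>
      by (cases "x > 0") (auto simp: morse_def)
    finally show "sqrt (2 * (height x / x^2)) = morse x / x" .
  qed
  then have "\<forall>\<^sub>F x in at 0. sqrt (2 * (height x / x^2)) = morse x / x"
    by (auto simp: eventually_at_filter)
  ultimately show ?thesis by (auto dest: tendsto_cong[THEN iffD1, rotated])
qed

lemma morse_has_derivative_0: "(morse has_real_derivative morse_d1 0) (at 0)"
  unfolding has_field_derivative_iff using morse_over_id_tendsto by (simp add: morse_0 morse_d1_def)

lemma morse_has_derivative_pos: "x > 0 \<Longrightarrow> (morse has_real_derivative morse_d1 x) (at x)"
proof -
  assume x: "x > 0"
  have "((\<lambda>y. sqrt (2 * height y)) has_real_derivative inverse (sqrt (2 * height x)) / 2 * (2 * U1 x)) (at x)"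
    by (rule DERIV_chain2[OF DERIV_real_sqrt]) (use height_pos[of x] x in \<open>auto intro!: derivative_eq_intros height_has_derivative\<close>)
  moreover have "inverse (sqrt (2 * height x)) / 2 * (2 * U1 x) = morse_d1 x"
    using x by (simp add: morse_d1_def morse_def field_simps)
  ultimately have "((\<lambda>y. sqrt (2 * height y)) has_real_derivative morse_d1 x) (at x)" by simp
  then show ?thesis
    by (rule has_field_derivative_transform_within_open[where S="{0<..}"]) (use x in \<open>auto simp: morse_def\<close>)
qed

lemma morse_has_derivative_neg: "x < 0 \<Longrightarrow> (morse has_real_derivative morse_d1 x) (at x)"
proof -
  assume x: "x < 0"
  have "((\<lambda>y. - sqrt (2 * height y)) has_real_derivative - (inverse (sqrt (2 * height x)) / 2 * (2 * U1 x))) (at x)"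
    by (intro DERIV_minus DERIV_chain2[OF DERIV_real_sqrt]) (use height_pos[of x] x in \<open>auto intro!: derivative_eq_intros height_has_derivative\<close>)
  moreover have "- (inverse (sqrt (2 * height x)) / 2 * (2 * U1 x)) = morse_d1 x"
    using x by (simp add: morse_d1_def morse_def field_simps)
  ultimately have "((\<lambda>y. - sqrt (2 * height y)) has_real_derivative morse_d1 x) (at x)" by simp
  then show ?thesis
    by (rule has_field_derivative_transform_within_open[where S="{..<0}"]) (use x in \<open>auto simp: morse_def\<close>)
qed

lemma morse_has_derivative: "(morse has_real_derivative morse_d1 x) (at x)"
  using morse_has_derivative_0 morse_has_derivative_pos morse_has_derivative_neg by (cases x "0::real" rule: linorder_cases) auto

lemma morse_isCont: "isCont morse x" using morse_has_derivative DERIV_isCont by blast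

lemma morse_d1_pos: "morse_d1 x > 0"
proof (cases x "0::real" rule: linorder_cases)
  case less then show ?thesis using U1_neg morse_neg by (simp add: morse_d1_def divide_neg_neg)
next
  case equal then show ?thesis using U2_0_pos by (simp add: morse_d1_def)
next
  case greater then show ?thesis using U1_pos morse_pos by (simp add: morse_d1_def)
qed

lemma morse_mult_morse_d1: "morse x * morse_d1 x = U1 x"
  by (cases "x = 0") (auto simp: morse_d1_def morse_0 U1_0 morse_nonzero)

lemma morse_d1_isCont_0: "isCont morse_d1 0"
proof -
  have "((\<lambda>x. (U1 x / x) / (morse x / x)) \<longlongrightarrow> U2 0 / sqrt (U2 0)) (at 0)"
    by (rule tendsto_divide[OF U1_over_id_tendsto morse_over_id_tendsto]) (use U2_0_pos in simp)
  moreover have "U2 0 / sqrt (U2 0) = morse_d1 0" using U2_0_pos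
    by (simp add: morse_d1_def) (metis less_eq_real_def real_div_sqrt)
  moreover have "\<forall>\<^sub>F x in at 0. (U1 x / x) / (morse x / x) = morse_d1 x"
    by (auto simp: eventually_at_filter morse_d1_def)
  ultimately have "(morse_d1 \<longlongrightarrow> morse_d1 0) (at 0)" by (auto dest: tendsto_cong[THEN iffD1, rotated])
  then show ?thesis by (simp add: isCont_def)
qed

lemma morse_defect_has_derivative: "(morse_defect has_real_derivative 2 * U3 x * height x) (at x)"
  unfolding morse_defect_def[abs_def] by (auto intro!: derivative_eq_intros U0_deriv U1_deriv U2_deriv height_has_derivative simp: algebra_simps)

lemma morse_defect_0: "morse_defect 0 = 0" by (simp add: morse_defect_def height_0 U1_0)
lemma morse_defect_isCont: "isCont morse_defect x" using morse_defect_has_derivative DERIV_isCont by blast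

lemma morse_defect_over_cube_tendsto: "((\<lambda>x. morse_defect x / x^3) \<longlongrightarrow> 0) (at 0)"
proof (rule lhopital[where f' = "\<lambda>x. 2 * U3 x * height x" and g' = "\<lambda>x. 3 * x^2"])
  show "(morse_defect \<longlongrightarrow> 0) (at 0)" using morse_defect_isCont[of 0] morse_defect_0 by (simp add: isCont_def)
  show "((\<lambda>x. x^3) \<longlongrightarrow> (0::real)) (at 0)" by (auto intro!: tendsto_eq_intros)
  show "\<forall>\<^sub>F x in at 0. x^3 \<noteq> (0::real)" by (auto simp: eventually_at_filter)
  show "\<forall>\<^sub>F x in at 0. 3 * x^2 \<noteq> (0::real)" by (auto simp: eventually_at_filter)
  show "\<forall>\<^sub>F x in at 0. (morse_defect has_real_derivative 2 * U3 x * height x) (at x)" using morse_defect_has_derivative by simp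
  show "\<forall>\<^sub>F x in at 0. ((\<lambda>x. x^3) has_real_derivative 3 * x^2) (at x)"
    by (intro always_eventually allI) (auto intro!: derivative_eq_intros)
  have "((\<lambda>x. 2 / 3 * U3 x * (height x / x^2)) \<longlongrightarrow> 2 / 3 * U3 0 * (U2 0 / 2)) (at 0)"
    by (intro tendsto_intros height_over_square_tendsto) (use U3_isCont[of 0] in \<open>simp add: isCont_def\<close>)
  moreover have "\<forall>\<^sub>F x in at 0. 2 / 3 * U3 x * (height x / x^2) = 2 * U3 x * height x / (3 * x^2)"
    by (auto simp: eventually_at_filter)
  ultimately show "((\<lambda>x. 2 * U3 x * height x / (3 * x^2)) \<longlongrightarrow> 0) (at 0)"
    by (auto simp: U3_0 dest: tendsto_cong[THEN iffD1, rotated])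
qed

lemma morse_d2_tendsto_0: "(morse_d2 \<longlongrightarrow> 0) (at 0)"
proof -
  have "((\<lambda>x. (morse_defect x / x^3) / (morse x / x)^3) \<longlongrightarrow> 0 / (sqrt (U2 0))^3) (at 0)"
    by (intro tendsto_intros morse_defect_over_cube_tendsto morse_over_id_tendsto) (use U2_0_pos in simp)
  moreover have "\<forall>\<^sub>F x in at 0. (morse_defect x / x^3) / (morse x / x)^3 = morse_d2 x"
    by (auto simp: eventually_at_filter morse_d2_def power_divide)
  ultimately show ?thesis by (auto dest: tendsto_cong[THEN iffD1, rotated])
qed

lemma morse_d1_has_derivative_nonzero: "x \<noteq> 0 \<Longrightarrow> (morse_d1 has_real_derivative morse_d2 x) (at x)"
proof -
  assume x: "x \<noteq> 0"
  have gx: "morse x \<noteq> 0" using morse_nonzero x by simp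
  have d: "((\<lambda>y. U1 y / morse y) has_real_derivative (U2 x * morse x - U1 x * morse_d1 x) / (morse x * morse x)) (at x)"
    by (rule DERIV_divide[OF U1_deriv morse_has_derivative gx])
  have g1x: "morse_d1 x = U1 x / morse x" using x by (simp add: morse_d1_def)
  have "(U2 x * morse x - U1 x * (U1 x / morse x)) / (morse x * morse x) = (U2 x * (morse x)^2 - U1 x ^2) / (morse x)^3"
    using gx by (simp add: field_simps power2_eq_square power3_eq_cube)
  also have "\<dots> = morse_d2 x" using x by (simp add: morse_d2_def morse_defect_def morse_sq)
  finally have "(U2 x * morse x - U1 x * morse_d1 x) / (morse x * morse x) = morse_d2 x" using g1x by simp
  with d have d': "((\<lambda>y. U1 y / morse y) has_real_derivative morse_d2 x) (at x)" by simp
  show ?thesis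
  proof (cases "x > 0")
    case True then show ?thesis
      by (intro has_field_derivative_transform_within_open[OF d', where S="{0<..}"]) (auto simp: morse_d1_def)
  next
    case False then have "x < 0" using x by simp
    then show ?thesis
      by (intro has_field_derivative_transform_within_open[OF d', where S="{..<0}"]) (auto simp: morse_d1_def)
  qed
qed

lemma morse_d1_isCont: "isCont morse_d1 x"
  using morse_d1_isCont_0 morse_d1_has_derivative_nonzero DERIV_isCont by (cases "x = 0") auto

lemma morse_d1_has_derivative_0: "(morse_d1 has_real_derivative morse_d2 0) (at 0)"
  using DERIV_from_derivative_limit[OF morse_d1_isCont_0 morse_d1_has_derivative_nonzero morse_d2_tendsto_0]
  by (simp add: morse_d2_def)

lemma morse_d1_has_derivative: "(morse_d1 has_real_derivative morse_d2 x) (at x)"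
  using morse_d1_has_derivative_0 morse_d1_has_derivative_nonzero by (cases "x = 0") auto

lemma morse_d2_isCont: "isCont morse_d2 x"
proof (cases "x = 0")
  case True then show ?thesis using morse_d2_tendsto_0 by (simp add: isCont_def morse_d2_def)
next
  case False
  have "isCont (\<lambda>y. morse_defect y / (morse y)^3) x"
    using False morse_nonzero[OF False] by (intro continuous_intros morse_defect_isCont morse_isCont) auto
  moreover have "\<forall>\<^sub>F y in nhds x. morse_d2 y = morse_defect y / (morse y)^3"
  proof -
    have "\<forall>\<^sub>F y in nhds x. y \<noteq> 0"
      using False by (intro t1_space_nhds) auto
    then show ?thesis by eventually_elim (simp add: morse_d2_def)
  qed
  ultimately show ?thesis using isCont_cong[of morse_d2 _ x] by simp
qed

lemma morse_mono: "x < y \<Longrightarrow> morse x < morse y"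
  by (rule DERIV_pos_imp_increasing) (use morse_has_derivative morse_d1_pos in auto)

lemma morse_inj: "morse x = morse y \<Longrightarrow> x = y"
  using morse_mono by (metis less_irrefl linorder_neqE_linordered_idom)

lemma height_even: "height (- x) = height x" by (simp add: height_def U0_even)

lemma morse_odd: "morse (- x) = - morse x" by (simp add: morse_def height_even)

lemma morse_unbounded: "\<exists>x. morse x \<ge> y"
proof -
  have t: "U0 x - U0 1 \<ge> U1 1 * (x - 1)" for x
    by (rule convex_on_imp_above_tangent[OF U0_convex]) (auto simp: U0_deriv has_field_derivative_at_within)
  have u: "U1 1 > 0" using U1_pos by simp
  define x where "x = 1 + y^2 / (2 * U1 1)"
  have "height x \<ge> U1 1 * (x - 1)" using t[of x] height_pos[of 1] by (simp add: height_def)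
  also have "U1 1 * (x - 1) = y^2 / 2" using u by (simp add: x_def)
  finally have "2 * height x \<ge> y^2" by simp
  then have "sqrt (2 * height x) \<ge> y" by (rule real_le_rsqrt)
  moreover have "x > 0" using u by (simp add: x_def add_pos_nonneg)
  ultimately show ?thesis by (intro exI[of _ x]) (simp add: morse_def)
qed

lemma morse_surj: "\<exists>x. morse x = y"
proof -
  obtain b where b: "morse b \<ge> y" using morse_unbounded by blast
  obtain a' where a': "morse a' \<ge> - y" using morse_unbounded by blast
  define a where "a = min (- a') b"
  have "morse a \<le> morse (- a')" unfolding a_def using morse_mono by (cases "- a' \<le> b") (auto simp: min_def less_eq_real_def)
  then have ga: "morse a \<le> y" using a' morse_odd[of a'] by simp
  have "a \<le> b" by (simp add: a_def)
  then show ?thesis using IVT[of morse a y b] ga b morse_isCont by blast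
qed

lemma morse_d1_nonzero: "morse_d1 x \<noteq> 0" using morse_d1_pos[of x] by simp

definition "morse_inv y = (THE x. morse x = y)"

lemma morse_morse_inv: "morse (morse_inv y) = y"
  unfolding morse_inv_def by (rule theI') (use morse_surj morse_inj in blast)

lemma morse_inv_morse: "morse_inv (morse x) = x" using morse_morse_inv[of "morse x"] morse_inj by blast

lemma morse_inv_mono: "y < z \<Longrightarrow> morse_inv y < morse_inv z"
  by (metis morse_morse_inv morse_mono less_irrefl linorder_neqE_linordered_idom order.asym)

lemma morse_inv_mono_le: "y \<le> z \<Longrightarrow> morse_inv y \<le> morse_inv z"
  using morse_inv_mono by (cases "y = z") (auto simp: less_eq_real_def)

lemma morse_inv_odd: "morse_inv (- y) = - morse_inv y" by (metis morse_inv_morse morse_morse_inv morse_odd)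

lemma morse_inv_isCont: "isCont morse_inv y"
proof -
  have "isCont morse_inv (morse (morse_inv y))"
    by (rule isCont_inverse_function[where d=1]) (auto simp: morse_inv_morse morse_isCont)
  then show ?thesis by (simp add: morse_morse_inv)
qed

definition "morse_inv_d1 y = 1 / morse_d1 (morse_inv y)"
definition "morse_inv_d2 y = - morse_d2 (morse_inv y) * morse_inv_d1 y / (morse_d1 (morse_inv y))^2"

lemma morse_inv_d1_pos: "morse_inv_d1 y > 0" using morse_d1_pos by (simp add: morse_inv_d1_def)

lemma morse_inv_has_derivative: "(morse_inv has_real_derivative morse_inv_d1 y) (at y)"
proof -
  have "(morse_inv has_real_derivative inverse (morse_d1 (morse_inv y))) (at y)"
    by (rule DERIV_inverse_function[where a="y - 1" and b="y + 1"])
       (use morse_has_derivative morse_d1_nonzero morse_inv_isCont morse_morse_inv in auto)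
  then show ?thesis by (simp add: morse_inv_d1_def divide_inverse)
qed

lemma morse_inv_d1_isCont: "isCont morse_inv_d1 y"
  unfolding morse_inv_d1_def[abs_def] using morse_d1_pos
  by (intro continuous_intros isCont_o2[OF morse_inv_isCont morse_d1_isCont]) (auto simp: morse_d1_nonzero)

lemma morse_inv_d1_has_derivative: "(morse_inv_d1 has_real_derivative morse_inv_d2 y) (at y)"
proof -
  have "((\<lambda>y. 1 / morse_d1 (morse_inv y)) has_real_derivative (0 * morse_d1 (morse_inv y) - 1 * (morse_d2 (morse_inv y) * morse_inv_d1 y)) / (morse_d1 (morse_inv y) * morse_d1 (morse_inv y))) (at y)"
    by (intro DERIV_divide DERIV_const DERIV_chain2[OF morse_d1_has_derivative morse_inv_has_derivative]) (auto simp: morse_d1_nonzero)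
  then show ?thesis by (simp add: morse_inv_d1_def[abs_def] morse_inv_d2_def[of y] power2_eq_square)
qed

lemma morse_inv_d2_isCont: "isCont morse_inv_d2 y"
  unfolding morse_inv_d2_def[abs_def] using morse_d1_pos
  by (intro continuous_intros isCont_o2[OF morse_inv_isCont morse_d2_isCont] isCont_o2[OF morse_inv_isCont morse_d1_isCont] morse_inv_d1_isCont)
     (auto simp: morse_d1_nonzero)

lemma U1_morse_inv: "U1 (morse_inv y) = y / morse_inv_d1 y"
  using morse_mult_morse_d1[of "morse_inv y"] by (simp add: morse_morse_inv morse_inv_d1_def)

lemma morse_inv_0: "morse_inv 0 = 0" using morse_inv_morse[of 0] morse_0 by simp

lemma morse_inv_continuous_on: "continuous_on S morse_inv"
  using morse_inv_isCont by (simp add: continuous_at_imp_continuous_on)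

lemma morse_inv_d1_continuous_on: "continuous_on S morse_inv_d1"
  using morse_inv_d1_isCont by (simp add: continuous_at_imp_continuous_on)

lemma morse_inv_d2_continuous_on: "continuous_on S morse_inv_d2"
  using morse_inv_d2_isCont by (simp add: continuous_at_imp_continuous_on)

section \<open>Action-angle description of the orbits\<close>

text \<open>In the coordinate \<open>y = morse x\<close> the orbit of amplitude \<open>r\<close> is the circle
  \<open>(y, v) = (- r cos \<psi>, r sin \<psi>)\<close>, and \<open>dtime r \<psi>\<close> is \<open>dt/d\<psi>\<close> along it.
  Unlike the energy, the amplitude \<open>r\<close> is a smooth parameter up to the bottom of the well.\<close>

definition "dtime r \<psi> = morse_inv_d1 (- r * cos \<psi>)"
definition "dtime_dr r \<psi> = - cos \<psi> * morse_inv_d2 (- r * cos \<psi>)"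
definition "time r \<phi> = integral {0..\<phi>} (dtime r)"
definition "time_dr r \<phi> = integral {0..\<phi>} (dtime_dr r)"
definition "period_amp r = time r (2 * pi)"
definition "angle r t = (THE \<phi>. 0 \<le> \<phi> \<and> \<phi> \<le> 2 * pi \<and> time r \<phi> = t)"
definition "orbit_x r t = morse_inv (- r * cos (angle r t))"
definition "orbit_v r t = r * sin (angle r t)"

lemma dtime_continuous_on_pair: "continuous_on S (\<lambda>(r, \<psi>). dtime r \<psi>)"
  unfolding dtime_def split_beta
  by (intro continuous_on_compose2[OF morse_inv_d1_continuous_on[of UNIV]] continuous_intros) auto

lemma dtime_dr_continuous_on_pair: "continuous_on S (\<lambda>(r, \<psi>). dtime_dr r \<psi>)"
  unfolding dtime_dr_def split_beta
  by (intro continuous_on_compose2[OF morse_inv_d2_continuous_on[of UNIV]] continuous_intros) auto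

lemma dtime_continuous_on: "continuous_on S (dtime r)"
  unfolding dtime_def
  by (intro continuous_on_compose2[OF morse_inv_d1_continuous_on[of UNIV]] continuous_intros) auto

lemma dtime_dr_continuous_on: "continuous_on S (dtime_dr r)"
  unfolding dtime_dr_def
  by (intro continuous_on_compose2[OF morse_inv_d2_continuous_on[of UNIV]] continuous_intros) auto

lemma dtime_pos: "dtime r \<psi> > 0"
  by (simp add: dtime_def morse_inv_d1_pos)

lemma dtime_integrable: "dtime r integrable_on {a..b}"
  by (rule integrable_continuous_real[OF dtime_continuous_on])

lemma dtime_has_derivative_amp: "((\<lambda>r. dtime r \<psi>) has_real_derivative dtime_dr r \<psi>) (at r within S)"
proof -
  have "((\<lambda>r. morse_inv_d1 (- r * cos \<psi>)) has_real_derivative morse_inv_d2 (- r * cos \<psi>) * (- cos \<psi>)) (at r)"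
    by (rule DERIV_chain2[OF morse_inv_d1_has_derivative]) (auto intro!: derivative_eq_intros)
  then show ?thesis
    unfolding dtime_def dtime_dr_def by (auto simp: mult.commute intro: has_field_derivative_at_within)
qed

lemma time_has_derivative_amp:
  assumes "r \<in> S" "convex S"
  shows "((\<lambda>r. time r \<phi>) has_real_derivative time_dr r \<phi>) (at r within S)"
proof -
  have "((\<lambda>r. integral (cbox 0 \<phi>) (dtime r)) has_real_derivative integral (cbox 0 \<phi>) (dtime_dr r)) (at r within S)"
    by (rule leibniz_rule_field_derivative[OF dtime_has_derivative_amp _ dtime_dr_continuous_on_pair assms])
       (use dtime_integrable in auto)
  then show ?thesis by (simp add: time_def time_dr_def)
qed

lemma time_has_derivative_within:
  "0 \<le> \<phi> \<Longrightarrow> \<phi> \<le> b \<Longrightarrow> (time r has_real_derivative dtime r \<phi>) (at \<phi> within {0..b})"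
  unfolding time_def[abs_def] by (rule integral_has_real_derivative[OF dtime_continuous_on]) auto

lemma time_has_derivative: "0 < \<phi> \<Longrightarrow> (time r has_real_derivative dtime r \<phi>) (at \<phi>)"
  using time_has_derivative_within[of \<phi> "\<phi> + 1" r] at_within_Icc_at[of 0 \<phi> "\<phi> + 1"] by simp

lemma time_continuous_on: "continuous_on {0..b} (time r)"
  using time_has_derivative_within[of _ b r] by (intro DERIV_continuous_on) auto

lemma time_0 [simp]: "time r 0 = 0"
  by (simp add: time_def)

lemma time_diff: "0 \<le> a \<Longrightarrow> a \<le> b \<Longrightarrow> time r b - time r a = integral {a..b} (dtime r)"
  using Henstock_Kurzweil_Integration.integral_combine[OF _ _ dtime_integrable, of 0 a b r] by (simp add: time_def)

lemma time_strict_mono: "0 \<le> a \<Longrightarrow> a < b \<Longrightarrow> time r a < time r b"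
proof -
  assume a: "0 \<le> a" "a < b"
  have "continuous_on {a..b} (time r)" using time_continuous_on[of b r] by (rule continuous_on_subset) (use a in auto)
  moreover have "\<And>x. a < x \<Longrightarrow> x < b \<Longrightarrow> (time r has_real_derivative dtime r x) (at x)"
    using a by (intro time_has_derivative) auto
  ultimately obtain l z where "a < z" "z < b" "(time r has_real_derivative l) (at z)" "time r b - time r a = (b - a) * l"
    using MVT[OF a(2), of "time r"] unfolding real_differentiable_def by blast
  moreover have "l = dtime r z" using calculation time_has_derivative[of z r] a DERIV_unique by auto
  moreover have "(b - a) * dtime r z > 0" using dtime_pos[of r z] a by (simp add: mult_pos_pos)
  ultimately show ?thesis by simp
qed

lemma time_inj: "0 \<le> a \<Longrightarrow> 0 \<le> b \<Longrightarrow> time r a = time r b \<Longrightarrow> a = b"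
  using time_strict_mono[of a b r] time_strict_mono[of b a r] by (cases a b rule: linorder_cases) auto

lemma time_nonneg: "0 \<le> \<phi> \<Longrightarrow> 0 \<le> time r \<phi>"
  using time_strict_mono[of 0 \<phi> r] by (cases "\<phi> = 0") auto

lemma time_le_period_amp: "\<phi> \<le> 2 * pi \<Longrightarrow> 0 \<le> \<phi> \<Longrightarrow> time r \<phi> \<le> period_amp r"
  unfolding period_amp_def using time_strict_mono[of \<phi> "2 * pi" r] by (cases "\<phi> = 2 * pi") auto

lemma period_amp_nonneg: "0 \<le> period_amp r"
  unfolding period_amp_def by (rule time_nonneg) simp

text \<open>The orbit is symmetric under \<open>\<psi> \<mapsto> 2 pi - \<psi>\<close>, so it spends half its period on each side.\<close>

lemma period_amp_eq_twice_half: "period_amp r = 2 * time r pi"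
proof -
  define F where "F x = time r (pi + x) - time r pi - (time r pi - time r (pi - x))" for x
  have cF: "continuous_on {0..pi} F"
  proof -
    have c: "continuous_on {0..2*pi} (time r)" by (rule time_continuous_on)
    have "continuous_on {0..pi} (\<lambda>x. time r (pi + x))"
      by (rule continuous_on_compose2[OF c]) (auto intro!: continuous_intros)
    moreover have "continuous_on {0..pi} (\<lambda>x. time r (pi - x))"
      by (rule continuous_on_compose2[OF c]) (auto intro!: continuous_intros)
    ultimately show ?thesis unfolding F_def by (intro continuous_intros)
  qed
  have dF: "(F has_real_derivative 0) (at x)" if "0 < x" "x < pi" for x
  proof -
    have "(F has_real_derivative (dtime r (pi + x) * 1 - 0 - (0 - dtime r (pi - x) * (-1)))) (at x)"
      unfolding F_def
      by (intro derivative_intros DERIV_chain2[OF time_has_derivative]) (use that in \<open>auto intro!: derivative_eq_intros\<close>)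
    moreover have "dtime r (pi + x) = dtime r (pi - x)" by (simp add: dtime_def)
    ultimately show ?thesis by simp
  qed
  have "F pi = F 0" by (rule DERIV_isconst2[OF pi_gt_zero cF dF]) auto
  then show ?thesis by (simp add: F_def period_amp_def)
qed

lemma angle:
  assumes "0 \<le> t" "t \<le> period_amp r"
  shows "0 \<le> angle r t \<and> angle r t \<le> 2 * pi \<and> time r (angle r t) = t"
proof -
  have "\<exists>\<phi>. 0 \<le> \<phi> \<and> \<phi> \<le> 2 * pi \<and> time r \<phi> = t"
    using IVT'[of "time r" 0 t "2 * pi", OF _ _ _ time_continuous_on] assms by (auto simp: period_amp_def)
  then have "\<exists>!\<phi>. 0 \<le> \<phi> \<and> \<phi> \<le> 2 * pi \<and> time r \<phi> = t" using time_inj by blast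
  then show ?thesis unfolding angle_def by (rule theI')
qed

lemma angle_time: "0 \<le> \<phi> \<Longrightarrow> \<phi> \<le> 2 * pi \<Longrightarrow> angle r (time r \<phi>) = \<phi>"
  using angle[of "time r \<phi>" r] time_inj time_nonneg time_le_period_amp by metis

lemma angle_fraction:
  assumes "0 \<le> \<theta>" "\<theta> \<le> 1"
  shows "0 \<le> angle r (\<theta> * period_amp r) \<and> angle r (\<theta> * period_amp r) \<le> 2 * pi \<and>
    time r (angle r (\<theta> * period_amp r)) = \<theta> * period_amp r"
  by (rule angle) (use assms period_amp_nonneg[of r] in \<open>auto simp: mult_left_le_one_le\<close>)

lemma time_image: "time r ` {0..2 * pi} = {0..period_amp r}"
proof
  show "time r ` {0..2 * pi} \<subseteq> {0..period_amp r}"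
    using time_nonneg time_le_period_amp by auto
  show "{0..period_amp r} \<subseteq> time r ` {0..2 * pi}"
    using angle by (metis atLeastAtMost_iff image_eqI subsetI)
qed

lemma angle_continuous_on: "continuous_on {0..period_amp r} (angle r)"
  using continuous_on_inv[OF time_continuous_on[of "2 * pi" r] compact_Icc] angle_time time_image by auto

lemma angle_0: "angle r 0 = 0"
  using angle_time[of 0 r] by simp

lemma angle_pos: "0 < t \<Longrightarrow> t \<le> period_amp r \<Longrightarrow> 0 < angle r t"
  using angle[of t r] time_0 by (metis less_eq_real_def less_irrefl)

lemma angle_has_derivative: "0 < t \<Longrightarrow> t < period_amp r \<Longrightarrow> (angle r has_real_derivative inverse (dtime r (angle r t))) (at t)"
proof -
  assume t: "0 < t" "t < period_amp r"
  show ?thesis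
  proof (rule DERIV_inverse_function[where f="time r" and a=0 and b="period_amp r"])
    show "(time r has_real_derivative dtime r (angle r t)) (at (angle r t))"
      using time_has_derivative angle_pos t by simp
    show "dtime r (angle r t) \<noteq> 0" using dtime_pos[of r "angle r t"] by simp
    show "\<And>y. 0 < y \<Longrightarrow> y < period_amp r \<Longrightarrow> time r (angle r y) = y" using angle by simp
    show "isCont (angle r) t" using continuous_on_interior[OF angle_continuous_on, of t r] t by simp
  qed (use t in auto)
qed

lemma orbit_x_has_derivative: "0 < t \<Longrightarrow> t < period_amp r \<Longrightarrow> (orbit_x r has_real_derivative orbit_v r t) (at t)"
proof -
  assume t: "0 < t" "t < period_amp r"
  have "((\<lambda>t. morse_inv (- r * cos (angle r t))) has_real_derivative
      morse_inv_d1 (- r * cos (angle r t)) * (r * sin (angle r t) * inverse (dtime r (angle r t)))) (at t)"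
    by (rule DERIV_chain2[OF morse_inv_has_derivative]) (auto intro!: derivative_eq_intros angle_has_derivative[OF t])
  moreover have "morse_inv_d1 (- r * cos (angle r t)) * (r * sin (angle r t) * inverse (dtime r (angle r t))) = orbit_v r t"
    using morse_inv_d1_pos[of "- r * cos (angle r t)"] by (simp add: dtime_def orbit_v_def field_simps)
  ultimately show ?thesis by (simp add: orbit_x_def[abs_def])
qed

lemma orbit_v_has_derivative: "0 < t \<Longrightarrow> t < period_amp r \<Longrightarrow> (orbit_v r has_real_derivative - U1 (orbit_x r t)) (at t)"
proof -
  assume t: "0 < t" "t < period_amp r"
  have "((\<lambda>t. r * sin (angle r t)) has_real_derivative r * (cos (angle r t) * inverse (dtime r (angle r t)))) (at t)"
    by (auto intro!: derivative_eq_intros angle_has_derivative[OF t])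
  moreover have "r * (cos (angle r t) * inverse (dtime r (angle r t))) = - U1 (orbit_x r t)"
    using morse_inv_d1_pos[of "- r * cos (angle r t)"] by (simp add: dtime_def orbit_x_def U1_morse_inv field_simps)
  ultimately show ?thesis by (simp add: orbit_v_def[abs_def])
qed

lemma orbit_x_continuous_on: "continuous_on {0..period_amp r} (orbit_x r)"
  unfolding orbit_x_def[abs_def]
  by (intro continuous_on_compose2[OF morse_inv_continuous_on[of UNIV]] continuous_intros angle_continuous_on) auto

lemma orbit_v_continuous_on: "continuous_on {0..period_amp r} (orbit_v r)"
  unfolding orbit_v_def[abs_def] by (intro continuous_intros angle_continuous_on)

lemma orbit_x_0: "orbit_x r 0 = - morse_inv r" by (simp add: orbit_x_def angle_0 morse_inv_odd)
lemma orbit_v_0: "orbit_v r 0 = 0" by (simp add: orbit_v_def angle_0)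

lemma abs_orbit_x_le: "0 \<le> r \<Longrightarrow> \<bar>orbit_x r t\<bar> \<le> morse_inv r"
proof -
  assume r: "0 \<le> r"
  have c: "\<bar>cos (angle r t)\<bar> \<le> 1" by (rule abs_cos_le_one)
  have "\<bar>r * cos (angle r t)\<bar> \<le> r" using mult_left_mono[OF c r] r by (simp add: abs_mult)
  then have "- r \<le> - r * cos (angle r t)" "- r * cos (angle r t) \<le> r" by (auto simp: abs_le_iff)
  then have "morse_inv (- r) \<le> orbit_x r t" "orbit_x r t \<le> morse_inv r" unfolding orbit_x_def by (auto intro: morse_inv_mono_le)
  then show ?thesis using morse_inv_odd[of r] by auto
qed

section \<open>Dependence on the amplitude\<close>

lemma dtime_bounds:
  obtains c M where "0 < c" "0 \<le> M"
    "\<And>r \<psi>. \<bar>r\<bar> \<le> a \<Longrightarrow> c \<le> dtime r \<psi> \<and> dtime r \<psi> \<le> M \<and> \<bar>dtime_dr r \<psi>\<bar> \<le> M"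
proof -
  let ?I = "{-\<bar>a\<bar>..\<bar>a\<bar>}"
  obtain y1 where y1: "\<forall>y\<in>?I. morse_inv_d1 y1 \<le> morse_inv_d1 y"
    using continuous_attains_inf[of ?I morse_inv_d1] morse_inv_d1_continuous_on by auto
  obtain y2 where y2: "\<forall>y\<in>?I. morse_inv_d1 y \<le> morse_inv_d1 y2"
    using continuous_attains_sup[of ?I morse_inv_d1] morse_inv_d1_continuous_on by auto
  have "continuous_on ?I (\<lambda>y. \<bar>morse_inv_d2 y\<bar>)"
    by (intro continuous_intros morse_inv_d2_continuous_on)
  then obtain y3 where y3: "\<forall>y\<in>?I. \<bar>morse_inv_d2 y\<bar> \<le> \<bar>morse_inv_d2 y3\<bar>"
    using continuous_attains_sup[of ?I] by auto
  define M where "M = max (morse_inv_d1 y2) \<bar>morse_inv_d2 y3\<bar>"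
  have bounds: "morse_inv_d1 y1 \<le> dtime r \<psi> \<and> dtime r \<psi> \<le> M \<and> \<bar>dtime_dr r \<psi>\<bar> \<le> M"
    if "\<bar>r\<bar> \<le> a" for r \<psi>
  proof -
    have "\<bar>r\<bar> * \<bar>cos \<psi>\<bar> \<le> \<bar>a\<bar> * 1"
      using that abs_cos_le_one[of \<psi>] by (intro mult_mono) auto
    then have "\<bar>- r * cos \<psi>\<bar> \<le> \<bar>a\<bar>" by (simp add: abs_mult)
    then have y: "- r * cos \<psi> \<in> ?I" by (auto simp: abs_le_iff)
    have "\<bar>morse_inv_d2 (- r * cos \<psi>)\<bar> \<le> M" using bspec[OF y3 y] unfolding M_def by linarith
    then have "\<bar>cos \<psi>\<bar> * \<bar>morse_inv_d2 (- r * cos \<psi>)\<bar> \<le> 1 * M"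
      using abs_cos_le_one[of \<psi>] by (intro mult_mono) auto
    moreover have "morse_inv_d1 (- r * cos \<psi>) \<le> M" using bspec[OF y2 y] unfolding M_def by linarith
    ultimately show ?thesis using bspec[OF y1 y] by (simp add: dtime_def dtime_dr_def abs_mult)
  qed
  show ?thesis
    by (rule that[OF morse_inv_d1_pos _ bounds]) (auto simp: M_def)
qed

lemma abs_time_dr_le:
  assumes "\<And>\<psi>. \<bar>dtime_dr r \<psi>\<bar> \<le> M" "0 \<le> \<phi>"
  shows "\<bar>time_dr r \<phi>\<bar> \<le> M * \<phi>"
  using integral_bound[of 0 \<phi> "dtime_dr r" M] assms dtime_dr_continuous_on by (simp add: time_dr_def)

lemma time_diff_ge:
  assumes "\<And>\<psi>. c \<le> dtime r \<psi>" "0 \<le> a" "a \<le> b"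
  shows "c * (b - a) \<le> time r b - time r a"
proof -
  have "integral {a..b} (\<lambda>_. c) \<le> integral {a..b} (dtime r)"
    by (rule integral_le) (use assms dtime_integrable in auto)
  then show ?thesis using time_diff[of a b r] assms by (simp add: mult.commute)
qed

lemma abs_time_diff_ge:
  assumes "\<And>\<psi>. c \<le> dtime r \<psi>" "0 \<le> a" "0 \<le> b"
  shows "c * \<bar>b - a\<bar> \<le> \<bar>time r b - time r a\<bar>"
  using time_diff_ge[of c r a b] time_diff_ge[of c r b a] assms by (cases "a \<le> b") auto

lemma time_diff_linear_approx:
  assumes "0 \<le> p" "0 \<le> q" "\<And>\<psi>. \<psi> \<in> {min p q..max p q} \<Longrightarrow> \<bar>dtime z \<psi> - c\<bar> \<le> e"
  shows "\<bar>(time z p - time z q) - c * (p - q)\<bar> \<le> e * \<bar>p - q\<bar>"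
proof -
  have approx: "\<bar>(time z b - time z a) - c * (b - a)\<bar> \<le> e * (b - a)"
    if "0 \<le> a" "a \<le> b" "\<And>\<psi>. \<psi> \<in> {a..b} \<Longrightarrow> \<bar>dtime z \<psi> - c\<bar> \<le> e" for a b
  proof -
    have "time z b - time z a - c * (b - a) = integral {a..b} (\<lambda>\<psi>. dtime z \<psi> - c)"
      using time_diff[of a b z] that
      by (subst integral_diff) (auto intro: dtime_integrable simp: mult.commute)
    also have "\<bar>\<dots>\<bar> \<le> e * (b - a)"
      using integral_bound[of a b "\<lambda>\<psi>. dtime z \<psi> - c" e] that
        continuous_on_diff[OF dtime_continuous_on continuous_on_const]
      by auto
    finally show ?thesis .
  qed
  show ?thesis
    using approx[of q p] approx[of p q] assms
    by (cases "q \<le> p") (auto simp: abs_minus_commute algebra_simps)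
qed

definition "time_slope r p q = (if p = q then dtime r q else (time r p - time r q) / (p - q))"

lemma time_slope_pos: "0 \<le> p \<Longrightarrow> 0 \<le> q \<Longrightarrow> 0 < time_slope r p q"
  using time_strict_mono[of p q r] time_strict_mono[of q p r] dtime_pos[of r q]
  by (cases p q rule: linorder_cases) (auto simp: time_slope_def divide_neg_neg)

lemma time_slope_mult: "(p - q) * time_slope r p q = time r p - time r q"
  by (simp add: time_slope_def)

lemma dtime_locally_close:
  assumes "0 < e"
  shows "\<exists>d>0. \<forall>z p. \<bar>z - r\<bar> < d \<longrightarrow> \<bar>p - \<phi>\<bar> < d \<longrightarrow> \<bar>dtime z p - dtime r \<phi>\<bar> < e"
proof -
  have "isCont (\<lambda>(r, \<psi>). dtime r \<psi>) (r, \<phi>)"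
    using dtime_continuous_on_pair[of UNIV] by (simp add: continuous_on_eq_continuous_at)
  then obtain d where d: "0 < d" "\<And>x. dist x (r, \<phi>) < d \<Longrightarrow> \<bar>(\<lambda>(r, \<psi>). dtime r \<psi>) x - dtime r \<phi>\<bar> < e"
    unfolding continuous_at_eps_delta dist_real_def using assms by force
  have "\<bar>dtime z p - dtime r \<phi>\<bar> < e" if "\<bar>z - r\<bar> < d / 2" "\<bar>p - \<phi>\<bar> < d / 2" for z p
  proof -
    have "dist (z, p) (r, \<phi>) \<le> \<bar>z - r\<bar> + \<bar>p - \<phi>\<bar>"
      unfolding dist_Pair_Pair dist_real_def using sqrt_sum_squares_le_sum_abs by simp
    then show ?thesis using d(2)[of "(z, p)"] that by simp
  qed
  then show ?thesis using d(1) by (intro exI[of _ "d / 2"]) auto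
qed

lemma time_slope_tendsto:
  assumes \<Phi>: "(\<Phi> \<longlongrightarrow> \<phi>) (at r within S)" and "\<And>z. 0 \<le> \<Phi> z" "0 \<le> \<phi>"
  shows "((\<lambda>z. time_slope z (\<Phi> z) \<phi>) \<longlongrightarrow> dtime r \<phi>) (at r within S)"
proof (rule tendstoI)
  fix e :: real assume "0 < e"
  then obtain d where "0 < d" and near: "\<And>z p. \<bar>z - r\<bar> < d \<Longrightarrow> \<bar>p - \<phi>\<bar> < d \<Longrightarrow> \<bar>dtime z p - dtime r \<phi>\<bar> < e / 2"
    using dtime_locally_close[of "e / 2" r \<phi>] by auto
  have "\<forall>\<^sub>F z in at r within S. \<bar>z - r\<bar> < d"
    using tendsto_ident_at[of r S] \<open>0 < d\<close> unfolding tendsto_iff dist_real_def by blast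
  moreover have "\<forall>\<^sub>F z in at r within S. \<bar>\<Phi> z - \<phi>\<bar> < d"
    using \<Phi> \<open>0 < d\<close> unfolding tendsto_iff dist_real_def by blast
  ultimately show "\<forall>\<^sub>F z in at r within S. dist (time_slope z (\<Phi> z) \<phi>) (dtime r \<phi>) < e"
  proof eventually_elim
    case (elim z)
    show ?case
    proof (cases "\<Phi> z = \<phi>")
      case True
      then show ?thesis using near[of z \<phi>] elim \<open>0 < e\<close> by (simp add: time_slope_def dist_real_def)
    next
      case False
      have "\<bar>(time z (\<Phi> z) - time z \<phi>) - dtime r \<phi> * (\<Phi> z - \<phi>)\<bar> \<le> e / 2 * \<bar>\<Phi> z - \<phi>\<bar>"
      proof (rule time_diff_linear_approx)
        fix \<psi> assume "\<psi> \<in> {min (\<Phi> z) \<phi>..max (\<Phi> z) \<phi>}"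
        then have "\<bar>\<psi> - \<phi>\<bar> < d" using elim by (auto simp: abs_if split: if_splits)
        then show "\<bar>dtime z \<psi> - dtime r \<phi>\<bar> \<le> e / 2" using near[of z \<psi>] elim by simp
      qed (use assms in auto)
      then have "\<bar>time_slope z (\<Phi> z) \<phi> - dtime r \<phi>\<bar> \<le> e / 2"
        using False by (simp add: time_slope_def abs_mult[symmetric] divide_le_eq field_simps)
      then show ?thesis using \<open>0 < e\<close> by (simp add: dist_real_def)
    qed
  qed
qed

lemma angle_fraction_tendsto:
  assumes \<theta>: "0 \<le> \<theta>" "\<theta> \<le> 1" and r: "0 < r" "r \<le> r0"
  shows "((\<lambda>z. angle z (\<theta> * period_amp z)) \<longlongrightarrow> angle r (\<theta> * period_amp r)) (at r within {0<..r0})"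
proof -
  define S where "S = {0<..r0}"
  define \<Phi> where "\<Phi> z = angle z (\<theta> * period_amp z)" for z
  obtain c where c: "0 < c" "\<And>z \<psi>. \<bar>z\<bar> \<le> r0 \<Longrightarrow> c \<le> dtime z \<psi>"
    using dtime_bounds[of r0] by metis
  have \<Phi>: "0 \<le> \<Phi> z \<and> time z (\<Phi> z) = \<theta> * period_amp z" for z
    using angle_fraction[OF \<theta>] by (simp add: \<Phi>_def)
  have rS: "r \<in> S" "convex S" using r by (auto simp: S_def)
  have T: "((\<lambda>z. period_amp z - period_amp r) \<longlongrightarrow> 0) (at r within S)"
    using DERIV_continuous[OF time_has_derivative_amp[OF rS, of "2 * pi"]]
    by (simp add: period_amp_def[abs_def] continuous_within LIM_zero)
  have W: "((\<lambda>z. time z (\<Phi> r) - time r (\<Phi> r)) \<longlongrightarrow> 0) (at r within S)"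
    using DERIV_continuous[OF time_has_derivative_amp[OF rS, of "\<Phi> r"]]
    by (simp add: continuous_within LIM_zero)
  have bound: "\<bar>\<Phi> z - \<Phi> r\<bar> \<le>
      (\<theta> * \<bar>period_amp z - period_amp r\<bar> + \<bar>time z (\<Phi> r) - time r (\<Phi> r)\<bar>) / c" if "z \<in> S" for z
  proof -
    have "c * \<bar>\<Phi> z - \<Phi> r\<bar> \<le> \<bar>time z (\<Phi> z) - time z (\<Phi> r)\<bar>"
      by (rule abs_time_diff_ge) (use c that \<Phi> in \<open>auto simp: S_def\<close>)
    also have "time z (\<Phi> z) - time z (\<Phi> r) =
        \<theta> * (period_amp z - period_amp r) - (time z (\<Phi> r) - time r (\<Phi> r))"
      using \<Phi>[of z] \<Phi>[of r] by (simp add: algebra_simps)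
    also have "\<bar>\<dots>\<bar> \<le> \<theta> * \<bar>period_amp z - period_amp r\<bar> + \<bar>time z (\<Phi> r) - time r (\<Phi> r)\<bar>"
      using \<theta> abs_triangle_ineq4[of "\<theta> * (period_amp z - period_amp r)"] by (simp add: abs_mult)
    finally show ?thesis using c(1) by (simp add: field_simps)
  qed
  have "((\<lambda>z. \<Phi> z - \<Phi> r) \<longlongrightarrow> 0) (at r within S)"
  proof (rule Lim_null_comparison)
    show "\<forall>\<^sub>F z in at r within S. norm (\<Phi> z - \<Phi> r) \<le>
        (\<theta> * \<bar>period_amp z - period_amp r\<bar> + \<bar>time z (\<Phi> r) - time r (\<Phi> r)\<bar>) / c"
      using bound by (auto simp: eventually_at_filter)
    show "((\<lambda>z. (\<theta> * \<bar>period_amp z - period_amp r\<bar> + \<bar>time z (\<Phi> r) - time r (\<Phi> r)\<bar>) / c)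
        \<longlongrightarrow> 0) (at r within S)"
      using tendsto_divide[OF tendsto_add[OF tendsto_mult[OF tendsto_const tendsto_rabs_zero[OF T]]
        tendsto_rabs_zero[OF W]] tendsto_const, of c] c(1) by simp
  qed
  then show ?thesis by (simp add: LIM_zero_iff \<Phi>_def S_def)
qed

text \<open>Implicit differentiation of \<open>time z (angle z (\<theta> * period_amp z)) = \<theta> * period_amp z\<close>, with the divided
  difference \<open>time_slope\<close> in place of the partial derivative in the angle.\<close>

lemma angle_fraction_has_derivative:
  assumes \<theta>: "0 \<le> \<theta>" "\<theta> \<le> 1" and r: "0 < r" "r \<le> r0"
  defines "\<phi> \<equiv> angle r (\<theta> * period_amp r)"
  shows "((\<lambda>z. angle z (\<theta> * period_amp z)) has_real_derivative
     (\<theta> * time_dr r (2 * pi) - time_dr r \<phi>) / dtime r \<phi>) (at r within {0<..r0})"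
proof -
  define S where "S = {0<..r0}"
  define \<Phi> where "\<Phi> z = angle z (\<theta> * period_amp z)" for z
  have \<Phi>: "0 \<le> \<Phi> z \<and> time z (\<Phi> z) = \<theta> * period_amp z" for z
    using angle_fraction[OF \<theta>] by (simp add: \<Phi>_def)
  have rS: "r \<in> S" "convex S" using r by (auto simp: S_def)
  have T': "((\<lambda>z. (period_amp z - period_amp r) / (z - r)) \<longlongrightarrow> time_dr r (2 * pi)) (at r within S)"
    using time_has_derivative_amp[OF rS, of "2 * pi"]
    by (simp add: has_field_derivative_iff period_amp_def[abs_def])
  have W': "((\<lambda>z. (time z \<phi> - time r \<phi>) / (z - r)) \<longlongrightarrow> time_dr r \<phi>) (at r within S)"
    using time_has_derivative_amp[OF rS, of \<phi>] by (simp add: has_field_derivative_iff)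
  have "(time z (\<Phi> z) - time z \<phi>) / (z - r) =
      \<theta> * ((period_amp z - period_amp r) / (z - r)) - (time z \<phi> - time r \<phi>) / (z - r)" for z
    using \<Phi>[of z] \<Phi>[of r] by (simp add: \<phi>_def \<Phi>_def diff_divide_distrib algebra_simps)
  then have num: "((\<lambda>z. (time z (\<Phi> z) - time z \<phi>) / (z - r))
      \<longlongrightarrow> \<theta> * time_dr r (2 * pi) - time_dr r \<phi>) (at r within S)"
    using tendsto_diff[OF tendsto_mult[OF tendsto_const T'] W'] by simp
  have slope: "((\<lambda>z. time_slope z (\<Phi> z) \<phi>) \<longlongrightarrow> dtime r \<phi>) (at r within S)"
    by (rule time_slope_tendsto)
      (use angle_fraction_tendsto[OF \<theta> r] \<Phi> in \<open>simp_all add: \<Phi>_def \<phi>_def S_def\<close>)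
  have "(\<Phi> z - \<phi>) / (z - r) = ((time z (\<Phi> z) - time z \<phi>) / (z - r)) / time_slope z (\<Phi> z) \<phi>" for z
  proof -
    have "time_slope z (\<Phi> z) \<phi> \<noteq> 0"
      using time_slope_pos[of "\<Phi> z" \<phi> z] \<Phi>[of z] \<Phi>[of r] by (simp add: \<phi>_def \<Phi>_def)
    then show ?thesis by (simp flip: time_slope_mult)
  qed
  then have "((\<lambda>z. (\<Phi> z - \<Phi> r) / (z - r)) \<longlongrightarrow> (\<theta> * time_dr r (2 * pi) - time_dr r \<phi>) / dtime r \<phi>)
      (at r within S)"
    using tendsto_divide[OF num slope] dtime_pos[of r \<phi>] by (simp add: \<phi>_def \<Phi>_def)
  then show ?thesis by (simp add: has_field_derivative_iff \<Phi>_def S_def)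
qed

lemma angle_fraction_deriv_bounded:
  obtains B where "0 \<le> B" "\<And>\<theta> r. 0 \<le> \<theta> \<Longrightarrow> \<theta> \<le> 1 \<Longrightarrow> 0 < r \<Longrightarrow> r \<le> r0 \<Longrightarrow>
    \<exists>D. ((\<lambda>z. angle z (\<theta> * period_amp z)) has_real_derivative D) (at r within {0<..r0}) \<and> \<bar>D\<bar> \<le> B"
proof -
  obtain c M where c: "0 < c" "0 \<le> M"
    and bounds: "\<And>r \<psi>. \<bar>r\<bar> \<le> r0 \<Longrightarrow> c \<le> dtime r \<psi> \<and> \<bar>dtime_dr r \<psi>\<bar> \<le> M"
    using dtime_bounds[of r0] by metis
  have bound: "\<bar>(\<theta> * time_dr r (2 * pi) - time_dr r \<phi>) / dtime r \<phi>\<bar> \<le> 4 * pi * M / c"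
    if "0 \<le> \<theta>" "\<theta> \<le> 1" "0 < r" "r \<le> r0" "0 \<le> \<phi>" "\<phi> \<le> 2 * pi" for \<theta> r \<phi>
  proof -
    have r: "\<bar>r\<bar> \<le> r0" using that by simp
    have "\<bar>time_dr r (2 * pi)\<bar> \<le> M * (2 * pi)" "\<bar>time_dr r \<phi>\<bar> \<le> M * \<phi>"
      using abs_time_dr_le[of r M] bounds[OF r] that by auto
    moreover have "\<bar>\<theta> * time_dr r (2 * pi)\<bar> \<le> \<bar>time_dr r (2 * pi)\<bar>"
      using that by (simp add: abs_mult mult_left_le_one_le)
    moreover have "M * \<phi> \<le> M * (2 * pi)" using that c by (intro mult_left_mono) auto
    moreover have "M * (2 * pi) + M * (2 * pi) = 4 * pi * M" by simp
    ultimately have "\<bar>\<theta> * time_dr r (2 * pi) - time_dr r \<phi>\<bar> \<le> 4 * pi * M"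
      using abs_triangle_ineq4[of "\<theta> * time_dr r (2 * pi)" "time_dr r \<phi>"] by linarith
    then show ?thesis
      using bounds[OF r, of \<phi>] c dtime_pos[of r \<phi>] by (simp add: abs_divide frac_le)
  qed
  show ?thesis
  proof (rule that)
    show "0 \<le> 4 * pi * M / c" using c by simp
    fix \<theta> r :: real assume \<theta>: "0 \<le> \<theta>" "\<theta> \<le> 1" and r: "0 < r" "r \<le> r0"
    show "\<exists>D. ((\<lambda>z. angle z (\<theta> * period_amp z)) has_real_derivative D) (at r within {0<..r0}) \<and>
        \<bar>D\<bar> \<le> 4 * pi * M / c"
      using angle_fraction_has_derivative[OF \<theta> r] bound[OF \<theta> r] angle_fraction[OF \<theta>, of r] by blast
  qed
qed

lemma orbit_fraction_has_derivative:
  assumes \<Phi>': "((\<lambda>z. angle z (\<theta> * period_amp z)) has_real_derivative D) (at r within S)"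
  defines "\<phi> \<equiv> angle r (\<theta> * period_amp r)"
  shows "((\<lambda>z. orbit_x z (\<theta> * period_amp z)) has_real_derivative
      morse_inv_d1 (- r * cos \<phi>) * (- cos \<phi> + r * sin \<phi> * D)) (at r within S)"
    and "((\<lambda>z. orbit_v z (\<theta> * period_amp z)) has_real_derivative sin \<phi> + r * (cos \<phi> * D))
      (at r within S)"
proof -
  have "((\<lambda>z. - z * cos (angle z (\<theta> * period_amp z))) has_real_derivative
      - 1 * cos \<phi> + - r * (- sin \<phi> * D)) (at r within S)"
    by (auto intro!: derivative_eq_intros \<Phi>' simp: \<phi>_def)
  from DERIV_chain[OF morse_inv_has_derivative this]
  show "((\<lambda>z. orbit_x z (\<theta> * period_amp z)) has_real_derivative
      morse_inv_d1 (- r * cos \<phi>) * (- cos \<phi> + r * sin \<phi> * D)) (at r within S)"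
    by (simp add: orbit_x_def[abs_def] o_def \<phi>_def algebra_simps)
  show "((\<lambda>z. orbit_v z (\<theta> * period_amp z)) has_real_derivative sin \<phi> + r * (cos \<phi> * D))
      (at r within S)"
    unfolding orbit_v_def[abs_def] by (auto intro!: derivative_eq_intros \<Phi>' simp: \<phi>_def)
qed

lemma orbit_fraction_deriv_bounded:
  obtains L where "0 \<le> L" "\<And>\<theta> r. 0 \<le> \<theta> \<Longrightarrow> \<theta> \<le> 1 \<Longrightarrow> 0 < r \<Longrightarrow> r \<le> r0 \<Longrightarrow>
    (\<exists>D. ((\<lambda>z. orbit_x z (\<theta> * period_amp z)) has_real_derivative D) (at r within {0<..r0}) \<and> \<bar>D\<bar> \<le> L) \<and>
    (\<exists>D. ((\<lambda>z. orbit_v z (\<theta> * period_amp z)) has_real_derivative D) (at r within {0<..r0}) \<and> \<bar>D\<bar> \<le> L)"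
proof -
  obtain B where B: "0 \<le> B" and \<Phi>': "\<And>\<theta> r. 0 \<le> \<theta> \<Longrightarrow> \<theta> \<le> 1 \<Longrightarrow> 0 < r \<Longrightarrow> r \<le> r0 \<Longrightarrow>
    \<exists>D. ((\<lambda>z. angle z (\<theta> * period_amp z)) has_real_derivative D) (at r within {0<..r0}) \<and> \<bar>D\<bar> \<le> B"
    using angle_fraction_deriv_bounded by blast
  obtain M where M: "0 \<le> M" "\<And>y \<psi>. \<bar>y\<bar> \<le> r0 \<Longrightarrow> dtime y \<psi> \<le> M"
    using dtime_bounds[of r0] by metis
  define L where "L = max 1 M * (1 + \<bar>r0\<bar> * B)"
  have "0 \<le> L" using B by (simp add: L_def)
  moreover have "(\<exists>D. ((\<lambda>z. orbit_x z (\<theta> * period_amp z)) has_real_derivative D) (at r within {0<..r0}) \<and> \<bar>D\<bar> \<le> L) \<and>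
    (\<exists>D. ((\<lambda>z. orbit_v z (\<theta> * period_amp z)) has_real_derivative D) (at r within {0<..r0}) \<and> \<bar>D\<bar> \<le> L)"
    if \<theta>: "0 \<le> \<theta>" "\<theta> \<le> 1" and r: "0 < r" "r \<le> r0" for \<theta> r
  proof -
    define \<phi> where "\<phi> = angle r (\<theta> * period_amp r)"
    obtain D where D: "((\<lambda>z. angle z (\<theta> * period_amp z)) has_real_derivative D) (at r within {0<..r0})"
      "\<bar>D\<bar> \<le> B" using \<Phi>'[OF \<theta> r] by blast
    have "\<bar>morse_inv_d1 (- r * cos \<phi>)\<bar> \<le> max 1 M"
      using M(2)[of r \<phi>] r morse_inv_d1_pos[of "- r * cos \<phi>"] by (simp add: dtime_def)
    moreover have "\<bar>r\<bar> \<le> \<bar>r0\<bar>" using r by simp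
    ultimately have "\<bar>morse_inv_d1 (- r * cos \<phi>) * (- cos \<phi> + r * sin \<phi> * D)\<bar> \<le> L"
      and v: "\<bar>sin \<phi> + r * (cos \<phi> * D)\<bar> \<le> 1 + \<bar>r0\<bar> * B"
      using abs_rotation_derivative_terms_le[of r "\<bar>r0\<bar>" D B] D(2) unfolding L_def by blast+
    moreover have "1 + \<bar>r0\<bar> * B \<le> L"
      using mult_right_mono[of 1 "max 1 M" "1 + \<bar>r0\<bar> * B"] B by (simp add: L_def)
    ultimately have "\<bar>morse_inv_d1 (- r * cos \<phi>) * (- cos \<phi> + r * sin \<phi> * D)\<bar> \<le> L"
      "\<bar>sin \<phi> + r * (cos \<phi> * D)\<bar> \<le> L" by linarith+
    then show ?thesis using orbit_fraction_has_derivative[OF D(1)] unfolding \<phi>_def by blast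
  qed
  ultimately show ?thesis using that by blast
qed

section \<open>Energy parametrisation and the characteristic flow\<close>

lemma U0_morse_inv: "U0 (morse_inv y) = Emin + y\<^sup>2 / 2"
  using morse_sq[of "morse_inv y"] by (simp add: morse_morse_inv height_def field_simps)

lemma morse_inv_pos: "0 < r \<Longrightarrow> 0 < morse_inv r"
  using morse_inv_mono[of 0 r] morse_inv_0 by simp

lemma abs_le_morse_inv_if_U0_le:
  assumes "U0 x \<le> Emin + R\<^sup>2 / 2" "0 \<le> R"
  shows "\<bar>x\<bar> \<le> morse_inv R"
proof -
  have "(morse x)\<^sup>2 \<le> R\<^sup>2" using morse_sq[of x] assms(1) by (simp add: height_def)
  then have "- R \<le> morse x" "morse x \<le> R"
    using assms(2) by (simp_all add: abs_le_square_iff power2_le_iff_abs_le abs_le_iff)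
  then have "morse_inv (- R) \<le> x" "x \<le> morse_inv R"
    using morse_inv_mono_le morse_inv_morse by metis+
  then show ?thesis using morse_inv_odd[of R] by auto
qed

lemma xplus_eq_morse_inv:
  assumes "0 < r"
  shows "xplus U0 (Emin + r\<^sup>2 / 2) = morse_inv r"
  unfolding xplus_def
proof (rule the_equality)
  show "0 \<le> morse_inv r \<and> U0 (morse_inv r) = Emin + r\<^sup>2 / 2"
    using morse_inv_pos[OF assms] U0_morse_inv by (simp add: less_imp_le)
  show "x = morse_inv r" if "0 \<le> x \<and> U0 x = Emin + r\<^sup>2 / 2" for x
    using that morse_inv_pos[OF assms] U0_strict_mono U0_morse_inv[of r]
    by (metis atLeast_iff less_eq_real_def linorder_neqE_linordered_idom order_less_irrefl strict_mono_onD)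
qed

lemma energy_gap_morse_inv_cos:
  "2 * (Emin + r\<^sup>2 / 2 - U0 (morse_inv (- r * cos \<psi>))) = (r * sin \<psi>)\<^sup>2"
  by (simp add: U0_morse_inv power_mult_distrib algebra_simps sin_squared_eq)

lemma substituted_period_integrand:
  assumes "0 < r" "0 < \<psi>" "\<psi> < pi"
  shows "1 / sqrt (2 * (Emin + r\<^sup>2 / 2 - U0 (morse_inv (- r * cos \<psi>)))) *
      (morse_inv_d1 (- r * cos \<psi>) * (r * sin \<psi>)) = dtime r \<psi>"
proof -
  have "0 < r * sin \<psi>" using sin_gt_zero assms by simp
  then have "sqrt (2 * (Emin + r\<^sup>2 / 2 - U0 (morse_inv (- r * cos \<psi>)))) = r * sin \<psi>"
    unfolding energy_gap_morse_inv_cos by simp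
  moreover have "r \<noteq> 0" "sin \<psi> \<noteq> 0" using \<open>0 < r * sin \<psi>\<close> by auto
  ultimately show ?thesis by (simp add: dtime_def)
qed

lemma half_period_integral:
  assumes r: "0 < r"
  shows "(LBINT x = - morse_inv r..morse_inv r. 1 / sqrt (2 * (Emin + r\<^sup>2 / 2 - U0 x))) = time r pi"
proof -
  define f where "f x = 1 / sqrt (2 * (Emin + r\<^sup>2 / 2 - U0 x))" for x
  define x where "x \<psi> = morse_inv (- r * cos \<psi>)" for \<psi>
  define x' where "x' \<psi> = morse_inv_d1 (- r * cos \<psi>) * (r * sin \<psi>)" for \<psi>
  have fx: "f (x \<psi>) * x' \<psi> = dtime r \<psi>" if "0 < \<psi>" "\<psi> < pi" for \<psi>
    using substituted_period_integrand[OF r that] by (simp add: f_def x_def x'_def)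
  have x_cont: "isCont x \<psi>" for \<psi>
    unfolding x_def by (intro continuous_intros isCont_o2[OF _ morse_inv_isCont])
  have "(LBINT x = ereal (x 0)..ereal (x pi). f x) = (LBINT \<psi> = ereal 0..ereal pi. f (x \<psi>) * x' \<psi>)"
  proof (rule interval_integral_substitution_nonneg(2))
    show "(x has_real_derivative x' \<psi>) (at \<psi>)" for \<psi>
      unfolding x_def[abs_def] x'_def
      by (rule DERIV_chain2[OF morse_inv_has_derivative]) (auto intro!: derivative_eq_intros)
    show "isCont f (x \<psi>)" if "ereal 0 < ereal \<psi>" "ereal \<psi> < ereal pi" for \<psi>
    proof -
      have "0 < 2 * (Emin + r\<^sup>2 / 2 - U0 (x \<psi>))"
        using sin_gt_zero[of \<psi>] that r unfolding x_def energy_gap_morse_inv_cos by simp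
      then show ?thesis unfolding f_def[abs_def] by (intro continuous_intros U0_isCont) auto
    qed
    show "isCont x' \<psi>" for \<psi>
      unfolding x'_def[abs_def] by (intro continuous_intros isCont_o2[OF _ morse_inv_d1_isCont])
    show "0 \<le> f (x \<psi>)" for \<psi>
      unfolding f_def x_def energy_gap_morse_inv_cos by simp
    show "0 \<le> x' \<psi>" if "ereal 0 \<le> ereal \<psi>" "ereal \<psi> \<le> ereal pi" for \<psi>
      using that morse_inv_d1_pos[of "- r * cos \<psi>"] sin_ge_zero[of \<psi>] r by (simp add: x'_def)
    show "((ereal \<circ> x \<circ> real_of_ereal) \<longlongrightarrow> ereal (x 0)) (at_right (ereal 0))"
      "((ereal \<circ> x \<circ> real_of_ereal) \<longlongrightarrow> ereal (x pi)) (at_left (ereal pi))"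
      using x_cont[of 0] x_cont[of pi] by (simp_all add: ereal_tendsto_simps isCont_def filterlim_at_split)
    have "set_integrable lborel {0<..<pi} (dtime r)"
      by (rule set_integrable_subset[OF borel_integrable_atLeastAtMost'[OF dtime_continuous_on, of 0 pi]]) auto
    then show "set_integrable lborel (einterval (ereal 0) (ereal pi)) (\<lambda>\<psi>. f (x \<psi>) * x' \<psi>)"
      using set_integrable_cong[of lborel lborel "{0<..<pi}" "{0<..<pi}" "\<lambda>\<psi>. f (x \<psi>) * x' \<psi>"] fx
      by simp
  qed simp
  also have "\<dots> = (LBINT \<psi> = ereal 0..ereal pi. dtime r \<psi>)"
    by (rule interval_integral_cong) (use fx in auto)
  also have "\<dots> = time r pi"
    unfolding time_def
    by (rule interval_integral_eq_integral) (auto intro: borel_integrable_atLeastAtMost'[OF dtime_continuous_on])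
  finally show ?thesis by (simp add: x_def f_def morse_inv_odd)
qed

lemma period_eq_period_amp:
  "0 < r \<Longrightarrow> period U0 (Emin + r\<^sup>2 / 2) = period_amp r"
  using half_period_integral[of r] period_amp_eq_twice_half[of r]
  by (simp add: period_def xplus_eq_morse_inv)

lemma flow_eq_orbit:
  fixes X V :: "real \<Rightarrow> real"
  assumes r: "0 < r"
    and init: "X 0 = - morse_inv r" "V 0 = 0"
    and X': "\<And>t. (X has_real_derivative V t) (at t)"
    and V': "\<And>t. (V has_real_derivative - U1 (X t)) (at t)"
    and t: "0 \<le> t" "t \<le> period_amp r"
  shows "X t = orbit_x r t \<and> V t = orbit_v r t"
proof -
  have "continuous_on UNIV U2" using U2_isCont by (simp add: continuous_at_imp_continuous_on)
  then obtain L where L: "0 \<le> L"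
    "\<And>a b. \<bar>a\<bar> \<le> morse_inv r \<Longrightarrow> \<bar>b\<bar> \<le> morse_inv r \<Longrightarrow> \<bar>U1 a - U1 b\<bar> \<le> L * \<bar>a - b\<bar>"
    using lipschitz_on_interval_if_C1[OF U1_deriv] by blast
  have "\<bar>X s\<bar> \<le> morse_inv r" for s
  proof (rule abs_le_morse_inv_if_U0_le)
    have "(V s)\<^sup>2 / 2 + U0 (X s) = Emin + r\<^sup>2 / 2"
      using energy_conservation[OF U0_deriv X' V', of s] init U0_even U0_morse_inv[of r] by simp
    then show "U0 (X s) \<le> Emin + r\<^sup>2 / 2" using zero_le_power2[of "V s"] by linarith
  qed (use r in simp)
  then have lip: "\<bar>U1 (X s) - U1 (orbit_x r s)\<bar> \<le> L * \<bar>X s - orbit_x r s\<bar>" for s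
    using L(2) abs_orbit_x_le r by simp
  have "continuous_on {0..period_amp r} X" "continuous_on {0..period_amp r} V"
    using DERIV_isCont[OF X'] DERIV_isCont[OF V'] by (auto intro!: continuous_at_imp_continuous_on)
  then show ?thesis
    using second_order_ode_unique[OF _ _ orbit_x_continuous_on orbit_v_continuous_on X' V'
        orbit_x_has_derivative orbit_v_has_derivative _ _ L(1) lip t]
    by (simp add: init orbit_x_0 orbit_v_0)
qed

lemma flow_at_period_fraction:
  fixes X V :: "real \<Rightarrow> real \<Rightarrow> real"
  assumes init: "\<forall>E\<in>{Emin<..E0}. X 0 E = - xplus U0 E \<and> V 0 E = 0"
    and ode: "\<forall>E\<in>{Emin<..E0}. \<forall>t. ((\<lambda>s. X s E) has_real_derivative V t E) (at t) \<and>
      ((\<lambda>s. V s E) has_real_derivative - U1 (X t E)) (at t)"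
    and e: "e \<in> {Emin<..E0}" and \<theta>: "0 \<le> \<theta>" "\<theta> \<le> 1"
  defines "r \<equiv> sqrt (2 * (e - Emin))"
  shows "X (\<theta> * period U0 e) e = orbit_x r (\<theta> * period_amp r) \<and>
    V (\<theta> * period U0 e) e = orbit_v r (\<theta> * period_amp r)"
proof -
  have r: "0 < r" "e = Emin + r\<^sup>2 / 2" using e by (simp_all add: r_def field_simps)
  then have "period U0 e = period_amp r" "xplus U0 e = morse_inv r"
    using period_eq_period_amp xplus_eq_morse_inv by simp_all
  moreover have "X t e = orbit_x r t \<and> V t e = orbit_v r t" if "0 \<le> t" "t \<le> period_amp r" for t
    by (rule flow_eq_orbit[OF r(1), of "\<lambda>s. X s e" "\<lambda>s. V s e"])
      (use init ode e that \<open>xplus U0 e = morse_inv r\<close> in auto)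
  ultimately show ?thesis
    using \<theta> period_amp_nonneg[of r] by (simp add: mult_left_le_one_le)
qed

lemma flow_fraction_bounds:
  fixes X V :: "real \<Rightarrow> real \<Rightarrow> real"
  assumes "Emin < E0"
    and init: "\<forall>E\<in>{Emin<..E0}. X 0 E = - xplus U0 E \<and> V 0 E = 0"
    and ode: "\<forall>E\<in>{Emin<..E0}. \<forall>t. ((\<lambda>s. X s E) has_real_derivative V t E) (at t) \<and>
      ((\<lambda>s. V s E) has_real_derivative - U1 (X t E)) (at t)"
  shows "\<exists>C. \<forall>\<theta>\<in>{0..1::real}.
     (\<forall>E\<in>{Emin<..E0}. \<exists>D.
        ((\<lambda>e. X (\<theta> * period U0 e) e) has_real_derivative D) (at E within {Emin<..E0}) \<and>
        \<bar>D\<bar> \<le> C * (E - Emin) powr (-1/2)) \<and>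
     (\<forall>E1\<in>{Emin<..E0}. \<forall>E2\<in>{Emin<..E0}.
        \<bar>X (\<theta> * period U0 E1) E1 - X (\<theta> * period U0 E2) E2\<bar> \<le> C * sqrt \<bar>E1 - E2\<bar>) \<and>
     (\<forall>E\<in>{Emin<..E0}. \<exists>D.
        ((\<lambda>e. V (\<theta> * period U0 e) e) has_real_derivative D) (at E within {Emin<..E0}) \<and>
        \<bar>D\<bar> \<le> C * (E - Emin) powr (-1/2)) \<and>
     (\<forall>E1\<in>{Emin<..E0}. \<forall>E2\<in>{Emin<..E0}.
        \<bar>V (\<theta> * period U0 E1) E1 - V (\<theta> * period U0 E2) E2\<bar> \<le> C * sqrt \<bar>E1 - E2\<bar>)"
proof -
  define r0 where "r0 = sqrt (2 * (E0 - Emin))"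
  obtain L where "0 \<le> L" and orbit': "\<And>\<theta> r. 0 \<le> \<theta> \<Longrightarrow> \<theta> \<le> 1 \<Longrightarrow> 0 < r \<Longrightarrow> r \<le> r0 \<Longrightarrow>
    (\<exists>D. ((\<lambda>z. orbit_x z (\<theta> * period_amp z)) has_real_derivative D) (at r within {0<..r0}) \<and> \<bar>D\<bar> \<le> L) \<and>
    (\<exists>D. ((\<lambda>z. orbit_v z (\<theta> * period_amp z)) has_real_derivative D) (at r within {0<..r0}) \<and> \<bar>D\<bar> \<le> L)"
    using orbit_fraction_deriv_bounded by blast
  have "L \<le> sqrt 2 * L" using \<open>0 \<le> L\<close> mult_right_mono[of 1 "sqrt 2" L] by simp
  then have weaken: "L * (e - Emin) powr (-1/2) \<le> sqrt 2 * L * (e - Emin) powr (-1/2)" for e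
    by (rule mult_right_mono) simp
  show ?thesis
  proof (rule exI[of _ "sqrt 2 * L"], intro ballI conjI)
    fix \<theta> :: real assume "\<theta> \<in> {0..1}"
    then have \<theta>: "0 \<le> \<theta>" "\<theta> \<le> 1" by auto
    note flow = flow_at_period_fraction[OF init ode _ \<theta>]
    have hx: "\<exists>D. ((\<lambda>z. orbit_x z (\<theta> * period_amp z)) has_real_derivative D) (at r within {0<..r0}) \<and> \<bar>D\<bar> \<le> L"
      and hv: "\<exists>D. ((\<lambda>z. orbit_v z (\<theta> * period_amp z)) has_real_derivative D) (at r within {0<..r0}) \<and> \<bar>D\<bar> \<le> L"
      if "r \<in> {0<..r0}" for r
      using orbit'[OF \<theta>, of r] that by simp_all
    note hx = hx[unfolded r0_def] and hv = hv[unfolded r0_def]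
    show "\<exists>D. ((\<lambda>e. X (\<theta> * period U0 e) e) has_real_derivative D) (at E within {Emin<..E0}) \<and>
        \<bar>D\<bar> \<le> sqrt 2 * L * (E - Emin) powr (-1/2)"
      "\<exists>D. ((\<lambda>e. V (\<theta> * period U0 e) e) has_real_derivative D) (at E within {Emin<..E0}) \<and>
        \<bar>D\<bar> \<le> sqrt 2 * L * (E - Emin) powr (-1/2)" if "E \<in> {Emin<..E0}" for E
      using sqrt_reparam_has_derivative[OF conjunct1[OF flow] hx that]
        sqrt_reparam_has_derivative[OF conjunct2[OF flow] hv that] weaken
      by (blast intro: order_trans)+
    show "\<bar>X (\<theta> * period U0 E1) E1 - X (\<theta> * period U0 E2) E2\<bar> \<le> sqrt 2 * L * sqrt \<bar>E1 - E2\<bar>"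
      "\<bar>V (\<theta> * period U0 E1) E1 - V (\<theta> * period U0 E2) E2\<bar> \<le> sqrt 2 * L * sqrt \<bar>E1 - E2\<bar>"
      if "E1 \<in> {Emin<..E0}" "E2 \<in> {Emin<..E0}" for E1 E2
      using sqrt_reparam_hoelder[OF conjunct1[OF flow] hx that]
        sqrt_reparam_hoelder[OF conjunct2[OF flow] hv that] by simp_all
  qed
qed

end

theorem propositionA3:
  fixes E0 M0 R0 :: real
    and phi :: "real \<Rightarrow> real"
    and U0 U1 U2 U3 :: "real \<Rightarrow> real"
    and X V :: "real \<Rightarrow> real \<Rightarrow> real"
  assumes E0_pos: "E0 > 0"
    and phi_choice: "(\<exists>k::real. k \<ge> 1 \<and> phi = polytrope E0 k) \<or> phi = king E0"
    \<comment> \<open>steady state of the plane-symmetric Vlasov--Poisson system with mass M0\<close>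
    and f0_int: "\<forall>x. integrable lborel (\<lambda>v. phi (v\<^sup>2 / 2 + U0 x))"
    and rho0_int: "integrable lborel (dens phi U0)"
    and poisson: "\<forall>x. integrable lborel (\<lambda>y. \<bar>x - y\<bar> * dens phi U0 y) \<and>
                     U0 x = 2 * pi * (LINT y|lborel. \<bar>x - y\<bar> * dens phi U0 y)"
    and mass: "M0 = (LINT x|lborel. dens phi U0 x)" and M0_pos: "M0 > 0"
    \<comment> \<open>stated properties of U0 (consequences of the above, recorded in the context)\<close>
    and U0_D1: "\<forall>x. (U0 has_real_derivative U1 x) (at x)"
    and U0_D2: "\<forall>x. (U1 has_real_derivative U2 x) (at x)"
    and U0_D3: "\<forall>x. (U2 has_real_derivative U3 x) (at x)"
    and U3_cont: "continuous_on UNIV U3"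
    and U0_even: "\<forall>x. U0 (- x) = U0 x"
    and U0_convex: "convex_on UNIV U0"
    and U0_mono: "strict_mono_on {0..} U0"
    and U2_0: "U2 0 = 4 * pi * dens phi U0 0" and U2_0_pos: "U2 0 > 0"
    and R0_pos: "R0 > 0"
    and support: "closure {x. dens phi U0 x \<noteq> 0} = {-R0..R0}"
    and E0_eq: "E0 = U0 R0"
    \<comment> \<open>characteristic flow started at (x_-(E), 0)\<close>
    and X_init: "\<forall>E\<in>{U0 0<..E0}. X 0 E = - xplus U0 E \<and> V 0 E = 0"
    and X_ode: "\<forall>E\<in>{U0 0<..E0}. \<forall>t.
                  ((\<lambda>s. X s E) has_real_derivative V t E) (at t) \<and>
                  ((\<lambda>s. V s E) has_real_derivative - U1 (X t E)) (at t)"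
  shows "\<exists>C. \<forall>\<theta>\<in>{0..1::real}.
     (\<forall>E\<in>{U0 0<..E0}. \<exists>D.
        ((\<lambda>e. X (\<theta> * period U0 e) e) has_real_derivative D) (at E within {U0 0<..E0}) \<and>
        \<bar>D\<bar> \<le> C * (E - U0 0) powr (-1/2)) \<and>
     (\<forall>E1\<in>{U0 0<..E0}. \<forall>E2\<in>{U0 0<..E0}.
        \<bar>X (\<theta> * period U0 E1) E1 - X (\<theta> * period U0 E2) E2\<bar> \<le> C * sqrt \<bar>E1 - E2\<bar>) \<and>
     (\<forall>E\<in>{U0 0<..E0}. \<exists>D.
        ((\<lambda>e. V (\<theta> * period U0 e) e) has_real_derivative D) (at E within {U0 0<..E0}) \<and>
        \<bar>D\<bar> \<le> C * (E - U0 0) powr (-1/2)) \<and>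
     (\<forall>E1\<in>{U0 0<..E0}. \<forall>E2\<in>{U0 0<..E0}.
        \<bar>V (\<theta> * period U0 E1) E1 - V (\<theta> * period U0 E2) E2\<bar> \<le> C * sqrt \<bar>E1 - E2\<bar>)"
proof -
  interpret single_well U0 U1 U2 U3
    by unfold_locales (use U0_D1 U0_D2 U0_D3 U3_cont U0_even U0_convex U0_mono U2_0_pos in auto)
  have "Emin < E0" using U0_mono R0_pos E0_eq by (auto simp: strict_mono_on_def Emin_def)
  from flow_fraction_bounds[OF this X_init[folded Emin_def] X_ode[folded Emin_def]]
  show ?thesis unfolding Emin_def .
qed

end
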